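(* Let $G\subset\mathbb{K}[\mathbf{x}][\boldsymbol{\partial}]$ be a finite set. Then the indicial ideal $\mathrm{ind}(G)=\{\mathrm{ind}(P): P\in\mathbb{K}(\mathbf{x})[\boldsymbol{\partial}]G\cap\mathbb{K}[\mathbf{x}][\boldsymbol{\partial}]\}$ is an ideal of $\mathbb{K}[y_1,\dots,y_n]$.
   Context: $\mathbb{K}$ is a field of characteristic zero; $\mathbb{K}(\mathbf{x})[\boldsymbol{\partial}]$ and $\mathbb{K}[\mathbf{x}][\boldsymbol{\partial}]$ are the rings of partial differential operators in $\partial_1,\dots,\partial_n$ with rational, resp. polynomial, coefficients in $x_1,\dots,x_n$; $\mathbb{K}(\mathbf{x})[\boldsymbol{\partial}]G$ is the left ideal generated by $G$. $\prec$ is a fixed graded term order on $\mathbb{N}^n$, applied to monomials $\mathbf{x}^{\mathbf{u}}$. Indicial polynomial: let $\delta_i=x_i\partial_i$. For nonzero $P=\sum_{|\mathbf{u}|\le m}c_{\mathbf{u}}\boldsymbol{\partial}^{\mathbf{u}}\in\mathbb{K}[\mathbf{x}][\boldsymbol{\partial}]$ of order $m$ (some $c_{\mathbf{u}}\ne0$ with $|\mathbf{u}|=m$), with $\mathbf{m}=(m,\dots,m)$ write uniquely $\mathbf{x}^{\mathbf{m}}P=\sum_{\mathbf{v}\in T}\mathbf{x}^{\mathbf{v}}\big(\sum_{|\mathbf{u}|\le m}c_{\mathbf{u},\mathbf{v}}\boldsymbol{\delta}^{\mathbf{u}}\big)$ with $c_{\mathbf{u},\mathbf{v}}\in\mathbb{K}$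 and nonzero inner sums; with $\mathbf{v}_0$ the $\prec$-minimal element of $T$, $\mathrm{ind}(P)=\sum_{|\mathbf{u}|\le m}c_{\mathbf{u},\mathbf{v}_0}\mathbf{y}^{\mathbf{u}}$; $\mathrm{ind}(0)=0$. *)

theory Defs
  imports "HOL-Library.Poly_Mapping" "HOL-Computational_Algebra.Fraction_Field"
begin

(* 
  The variables x_1..x_n are indexed by a finite linearly ordered type 'v
  (so n = CARD('v)).
  K[x] (and K[y]) is  ('v \<Rightarrow>_0 nat) \<Rightarrow>_0 'k, and K(x) is its fraction field.
  A differential operator with coefficients in a ring 'c is a finitely supported map
  from \<partial>-exponents to coefficients:  P = \<Sum>_u (Poly_Mapping.lookup P u) \<partial>^u  (coefficients on the left).
 *)

type_synonym 'v mon = "'v \<Rightarrow>\<^sub>0 nat"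
type_synonym ('v, 'k) mpoly = "'v mon \<Rightarrow>\<^sub>0 'k"
type_synonym ('v, 'c) dop = "'v mon \<Rightarrow>\<^sub>0 'c"

definition tdeg :: "'v mon \<Rightarrow> nat" where
  "tdeg u = (\<Sum>i\<in>Poly_Mapping.keys u. Poly_Mapping.lookup u i)"

definition mp_deriv :: "'v \<Rightarrow> ('v, 'k::comm_ring_1) mpoly \<Rightarrow> ('v, 'k) mpoly" where
  "mp_deriv i p = (\<Sum>m\<in>Poly_Mapping.keys p. Poly_Mapping.single (m - Poly_Mapping.single i 1)
                                   (of_nat (Poly_Mapping.lookup m i) * Poly_Mapping.lookup p m))"

definition rf_deriv :: "'v::{finite,linorder} \<Rightarrow> ('v, 'k::field_char_0) mpoly fract \<Rightarrow> ('v, 'k) mpoly fract" where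
  "rf_deriv i q = (THE r. \<forall>a b. b \<noteq> 0 \<longrightarrow> q = Fract a b \<longrightarrow>
       r = Fract (mp_deriv i a * b - a * mp_deriv i b) (b * b))"

(* Iterated derivation D^w = \<Prod>_i D_i^(w_i) (the D_i commute). *)
definition Dpow :: "('v::{finite,linorder} \<Rightarrow> 'c \<Rightarrow> 'c) \<Rightarrow> 'v mon \<Rightarrow> 'c \<Rightarrow> 'c" where
  "Dpow D w c = fold (\<lambda>i b. (D i ^^ Poly_Mapping.lookup w i) b) (sorted_list_of_set (UNIV :: 'v set)) c"

definition mbinom :: "'v::finite mon \<Rightarrow> 'v mon \<Rightarrow> nat" where
  "mbinom u w = (\<Prod>i\<in>UNIV. Poly_Mapping.lookup u i choose Poly_Mapping.lookup w i)"

(* Multiplication of differential operators over a coefficient ring with derivations D,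
  via the Leibniz rule  (a \<partial>^u)(b \<partial>^v) = \<Sum>_{w\<le>u} binom(u,w) a D^w(b) \<partial>^(u-w+v). *)
definition dop_mult :: "('v::{finite,linorder} \<Rightarrow> 'c \<Rightarrow> 'c) \<Rightarrow> ('v, 'c::comm_ring_1) dop \<Rightarrow> ('v, 'c) dop \<Rightarrow> ('v, 'c) dop" where
  "dop_mult D P Q = (\<Sum>u\<in>Poly_Mapping.keys P. \<Sum>v\<in>Poly_Mapping.keys Q. \<Sum>w\<in>{w. \<forall>i. Poly_Mapping.lookup w i \<le> Poly_Mapping.lookup u i}.
      Poly_Mapping.single (u - w + v)
        (of_nat (mbinom u w) * Poly_Mapping.lookup P u * Dpow D w (Poly_Mapping.lookup Q v)))"

definition dop_embed :: "('v::{finite,linorder}, ('v, 'k::field_char_0) mpoly) dop \<Rightarrow> ('v, ('v, 'k) mpoly fract) dop" where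
  "dop_embed P = Poly_Mapping.map (\<lambda>c. Fract c 1) P"

definition rat_left_ideal :: "('v::{finite,linorder}, ('v, 'k::field_char_0) mpoly) dop set \<Rightarrow> ('v, ('v, 'k) mpoly fract) dop set" where
  "rat_left_ideal G = {P. \<exists>S Q. finite S \<and> S \<subseteq> G \<and>
       P = (\<Sum>g\<in>S. dop_mult rf_deriv (Q g) (dop_embed g))}"

(* Operators of K[x][\<partial>]: multiplication, the Euler operators \<delta>_i = x_i \<partial>_i, x^v, \<delta>^u. *)
abbreviation pmult :: "('v::{finite,linorder}, ('v, 'k::field_char_0) mpoly) dop \<Rightarrow> _ \<Rightarrow> _" where
  "pmult \<equiv> dop_mult mp_deriv"

definition dop_xmon :: "'v::{finite,linorder} mon \<Rightarrow> ('v, ('v, 'k::field_char_0) mpoly) dop" where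
  "dop_xmon v = Poly_Mapping.single 0 (Poly_Mapping.single v 1)"

definition euler :: "'v::{finite,linorder} \<Rightarrow> ('v, ('v, 'k::field_char_0) mpoly) dop" where
  "euler i = Poly_Mapping.single (Poly_Mapping.single i 1) (Poly_Mapping.single (Poly_Mapping.single i 1) 1)"

definition delta_pow :: "'v::{finite,linorder} mon \<Rightarrow> ('v, ('v, 'k::field_char_0) mpoly) dop" where
  "delta_pow u = fold (\<lambda>i R. pmult ((pmult (euler i) ^^ Poly_Mapping.lookup u i) 1) R)
                      (sorted_list_of_set (UNIV :: 'v set)) 1"

definition dop_order :: "('v, 'c::zero) dop \<Rightarrow> nat" where
  "dop_order P = Max (tdeg ` Poly_Mapping.keys P)"

definition const_mon :: "nat \<Rightarrow> 'v::finite mon" where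
  "const_mon m = (\<Sum>i\<in>UNIV. Poly_Mapping.single i m)"

(* The unique coefficients c_{u,v} with  x^m P = \<Sum>_v x^v (\<Sum>_{|u|\<le>m} c_{u,v} \<delta>^u),
  stored as  c v u. *)
definition ind_coeffs :: "('v::{finite,linorder}, ('v, 'k::field_char_0) mpoly) dop \<Rightarrow> 'v mon \<Rightarrow> 'v mon \<Rightarrow> 'k" where
  "ind_coeffs P = (THE c. finite {(v, u). c v u \<noteq> 0} \<and>
      (\<forall>v u. c v u \<noteq> 0 \<longrightarrow> tdeg u \<le> dop_order P) \<and>
      pmult (dop_xmon (const_mon (dop_order P))) P =
        (\<Sum>(v, u)\<in>{(v, u). c v u \<noteq> 0}.
           pmult (dop_xmon v) (Poly_Mapping.map (\<lambda>a. Poly_Mapping.single 0 (c v u) * a) (delta_pow u))))"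

definition graded_term_order :: "('v mon \<Rightarrow> 'v mon \<Rightarrow> bool) \<Rightarrow> bool" where
  "graded_term_order ord \<longleftrightarrow>
     (\<forall>a. \<not> ord a a) \<and> (\<forall>a b c. ord a b \<longrightarrow> ord b c \<longrightarrow> ord a c) \<and>
     (\<forall>a b. a = b \<or> ord a b \<or> ord b a) \<and>
     (\<forall>a. a \<noteq> 0 \<longrightarrow> ord 0 a) \<and>
     (\<forall>a b c. ord a b \<longrightarrow> ord (a + c) (b + c)) \<and>
     (\<forall>a b. tdeg a < tdeg b \<longrightarrow> ord a b)"

definition ind :: "('v::{finite,linorder} mon \<Rightarrow> 'v mon \<Rightarrow> bool) \<Rightarrow>
    ('v, ('v, 'k::field_char_0) mpoly) dop \<Rightarrow> ('v, 'k) mpoly" where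
  "ind ord P = (if P = 0 then 0 else
     (let c = ind_coeffs P;
          T = {v. \<exists>u. c v u \<noteq> 0};
          v0 = (THE v0. v0 \<in> T \<and> (\<forall>v\<in>T. v \<noteq> v0 \<longrightarrow> ord v0 v))
      in (\<Sum>u\<in>{u. c v0 u \<noteq> 0}. Poly_Mapping.single u (c v0 u))))"

definition is_ideal :: "'a::comm_ring_1 set \<Rightarrow> bool" where
  "is_ideal I \<longleftrightarrow> 0 \<in> I \<and> (\<forall>a\<in>I. \<forall>b\<in>I. a + b \<in> I) \<and> (\<forall>r a. a \<in> I \<longrightarrow> r * a \<in> I)"

end

theory Submission
  imports Defs "HOL-Library.Function_Algebras"
begin

(* Expand x\<^sup>A P in the basis x\<^sup>v \<delta>\<^sup>u (\<delta>\<^sub>i = x\<^sub>i \<partial>\<^sub>i); ind P is the row of coefficients at the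
   \<prec>-least v. Because \<delta>\<^sup>u is triangular with respect to \<partial>, this expansion is unique, so the row does
   not depend on A and is unchanged when P is multiplied by a power of x. Multiplying two operators
   by suitable powers of x puts their least rows at the same v; then the rows of the sum add up.
   Constants scale the row. Finally \<delta>\<^sub>j P + (A\<^sub>j - v\<^sub>j) P, with v the least row of P, has the same
   least row, multiplied by y\<^sub>j, because the commutation rule \<delta>\<^sub>j x\<^sup>v = x\<^sup>v (\<delta>\<^sub>j + v\<^sub>j) contributes
   exactly v\<^sub>j there. All these operations stay in K(x)[\<partial>]G, so the set of indicial polynomials is
   closed under sums, constants and the variables y\<^sub>j, i.e. it is an ideal. *)

abbreviation lookup :: "('a \<Rightarrow>\<^sub>0 'b::zero) \<Rightarrow> 'a \<Rightarrow> 'b" where "lookup \<equiv> Poly_Mapping.lookup"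
abbreviation single :: "'a \<Rightarrow> 'b \<Rightarrow> 'a \<Rightarrow>\<^sub>0 'b::zero" where "single \<equiv> Poly_Mapping.single"
abbreviation keys :: "('a \<Rightarrow>\<^sub>0 'b::zero) \<Rightarrow> 'a set" where "keys \<equiv> Poly_Mapping.keys"

lemma poly_mapping_sum_single: "(P::'a \<Rightarrow>\<^sub>0 'b::comm_monoid_add) = (\<Sum>u\<in>keys P. single u (lookup P u))"
  by (rule poly_mapping_eqI) (auto simp: lookup_sum lookup_single when_def in_keys_iff)

lemma single_sum: "single k (sum f A) = (\<Sum>x\<in>A. single k (f x))"
  by (induction A rule: infinite_finite_induct) (auto simp: single_add)

definition unit_mon :: "'v \<Rightarrow> 'v mon" where
  "unit_mon i = single i 1"

lemma lookup_unit_mon: "lookup (unit_mon i) j = (if i = j then 1 else 0)"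
  by (simp add: unit_mon_def lookup_single when_def)

lemma unit_mon_neq_zero [simp]: "unit_mon i \<noteq> 0" "0 \<noteq> unit_mon i"
  by (metis unit_mon_def lookup_single_eq lookup_zero one_neq_zero)+

lemma mon_diff_add_unit_mon: "0 < lookup w i \<Longrightarrow> w - unit_mon i + unit_mon i = w"
  by (rule poly_mapping_eqI) (auto simp: lookup_add lookup_minus lookup_unit_mon)

lemma mon_diff_unit_mon_add: "0 < lookup (a::'v mon) i \<Longrightarrow> a - unit_mon i + b = a + b - unit_mon i"
  by (rule poly_mapping_eqI) (auto simp: lookup_add lookup_minus lookup_unit_mon)

lemma mon_add_diff_unit_mon: "0 < lookup (b::'v mon) i \<Longrightarrow> a + (b - unit_mon i) = a + b - unit_mon i"
  by (rule poly_mapping_eqI) (auto simp: lookup_add lookup_minus lookup_unit_mon)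

lemma unit_mon_add_eq_iff: "unit_mon i + v = w \<longleftrightarrow> 0 < lookup w i \<and> v = w - unit_mon i"
  using mon_diff_add_unit_mon[of w i] by (auto simp: lookup_add lookup_unit_mon add.commute)

lemma tdeg_UNIV: "tdeg (u :: 'v::finite mon) = (\<Sum>i\<in>UNIV. lookup u i)"
  unfolding tdeg_def by (rule sum.mono_neutral_left) (auto simp: in_keys_iff)

lemma tdeg_add_unit_mon: "tdeg (u + unit_mon j :: 'v::finite mon) = Suc (tdeg u)"
  by (simp add: tdeg_UNIV lookup_add sum.distrib lookup_unit_mon)

lemma lookup_le_tdeg: "lookup (u :: 'v::finite mon) i \<le> tdeg u"
  unfolding tdeg_UNIV by (rule member_le_sum) auto

lemma mon_induct [case_names zero add_unit]:
  assumes "P 0" "\<And>u j. P u \<Longrightarrow> P (u + unit_mon j)"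
  shows "P (u :: 'v::finite mon)"
proof (induction "tdeg u" arbitrary: u)
  case 0
  then have "u = 0" unfolding tdeg_UNIV by (intro poly_mapping_eqI) simp
  then show ?case using assms(1) by simp
next
  case (Suc n)
  then have "u \<noteq> 0" by (auto simp: tdeg_def)
  then obtain j where j: "0 < lookup u j" by (metis gr0I lookup_zero poly_mapping_eqI)
  then have u: "u = (u - unit_mon j) + unit_mon j" by (simp add: mon_diff_add_unit_mon)
  then have "tdeg (u - unit_mon j) = n" using Suc(2) tdeg_add_unit_mon[of "u - unit_mon j" j] by simp
  then have "P (u - unit_mon j)" using Suc(1) by simp
  then show ?case using assms(2) u by metis
qed

lemma lookup_const_mon: "lookup (const_mon m :: 'v::finite mon) i = m"
  by (simp add: const_mon_def lookup_sum lookup_single when_def)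

definition mon_divisors :: "'v mon \<Rightarrow> 'v mon set" where
  "mon_divisors u = {w. \<forall>i. lookup w i \<le> lookup u i}"

lemma finite_mon_divisors: "finite (mon_divisors (u :: 'v::finite mon))"
proof -
  let ?M = "Max (range (lookup u))"
  have "lookup ` mon_divisors u \<subseteq> {f. \<forall>x. (x \<in> UNIV \<longrightarrow> f x \<in> {0..?M}) \<and> (x \<notin> UNIV \<longrightarrow> f x = 0)}"
  proof (intro subsetI CollectI allI)
    fix f x assume "f \<in> lookup ` mon_divisors u"
    then obtain w where w: "w \<in> mon_divisors u" "f = lookup w" by blast
    have "lookup u x \<le> ?M" by (rule Max_ge) auto
    then show "(x \<in> UNIV \<longrightarrow> f x \<in> {0..?M}) \<and> (x \<notin> UNIV \<longrightarrow> f x = 0)"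
      using w by (auto simp: mon_divisors_def intro: le_trans)
  qed
  then have "finite (lookup ` mon_divisors u)"
    by (rule finite_subset) (rule finite_set_of_finite_funs, auto)
  then show ?thesis
    by (rule finite_imageD) (simp add: inj_on_def poly_mapping.lookup_inject)
qed

lemma mon_divisors_zero: "mon_divisors 0 = {0}"
  by (auto simp: mon_divisors_def intro: poly_mapping_eqI)

lemma mon_divisors_unit_mon: "mon_divisors (unit_mon i) = {0, unit_mon i}"
proof -
  have "w = 0 \<or> w = unit_mon i" if w: "w \<in> mon_divisors (unit_mon i)" for w
  proof -
    have le: "lookup w k \<le> lookup (unit_mon i) k" for k using w by (simp add: mon_divisors_def)
    have "lookup w k = (if lookup w i = 0 then 0 else lookup (unit_mon i) k)" for k
      using le[of k] le[of i] by (cases "k = i") (auto simp: lookup_unit_mon)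
    then show ?thesis by (cases "lookup w i = 0") (auto intro: poly_mapping_eqI)
  qed
  moreover have "{0, unit_mon i} \<subseteq> mon_divisors (unit_mon i)"
    by (auto simp: mon_divisors_def lookup_unit_mon)
  ultimately show ?thesis by blast
qed

lemma mon_divisors_mono: "mon_divisors u \<subseteq> mon_divisors (u + unit_mon i)"
  by (auto simp: mon_divisors_def lookup_add intro: trans_le_add1)

lemma mon_divisors_add_unit_mon:
  "bij_betw (\<lambda>w. w + unit_mon i) (mon_divisors u) {w \<in> mon_divisors (u + unit_mon i). 0 < lookup w i}"
proof (rule bij_betw_imageI)
  show "inj_on (\<lambda>w. w + unit_mon i) (mon_divisors u)" by (auto simp: inj_on_def)
  have "x \<in> (\<lambda>w. w + unit_mon i) ` mon_divisors u"
    if x: "x \<in> mon_divisors (u + unit_mon i)" "0 < lookup x i" for x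
  proof -
    have "x - unit_mon i \<in> mon_divisors u"
      using x(1) by (auto simp: mon_divisors_def lookup_add lookup_minus lookup_unit_mon
                          dest!: spec[where P = "\<lambda>k. lookup x k \<le> _ k"] split: if_splits)
    then show ?thesis using mon_diff_add_unit_mon[OF x(2)] by (metis image_eqI)
  qed
  then show "(\<lambda>w. w + unit_mon i) ` mon_divisors u = {w \<in> mon_divisors (u + unit_mon i). 0 < lookup w i}"
    by (auto simp: mon_divisors_def lookup_add lookup_unit_mon add_mono)
qed

lemma mon_divisors_diff_add:
  assumes "w \<in> mon_divisors u"
  shows "u + unit_mon i - w + v = unit_mon i + (u - w + v)"
proof (rule poly_mapping_eqI)
  fix k
  have "lookup w k \<le> lookup u k" using assms by (simp add: mon_divisors_def)
  then show "lookup (u + unit_mon i - w + v) k = lookup (unit_mon i + (u - w + v)) k"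
    by (simp add: lookup_add lookup_minus lookup_unit_mon)
qed

lemma tdeg_less_if_mon_divisor:
  assumes "w \<in> mon_divisors u" "w \<noteq> u"
  shows "tdeg (w :: 'v::finite mon) < tdeg u"
proof -
  obtain k where "lookup w k \<noteq> lookup u k" using assms(2) poly_mapping_eqI by metis
  then have "lookup w k < lookup u k" using assms(1) by (simp add: mon_divisors_def le_neq_implies_less)
  then show ?thesis unfolding tdeg_UNIV using assms(1)
    by (intro sum_strict_mono_ex1) (auto simp: mon_divisors_def)
qed

lemma mbinom_split: "mbinom u w = (lookup u i choose lookup w i) * (\<Prod>j\<in>UNIV-{i}. lookup u j choose lookup w j)"
  unfolding mbinom_def by (subst prod.remove[of UNIV i]) auto

lemma mbinom_add_unit_mon:
  "mbinom (u + unit_mon i) w = mbinom u w + (if 0 < lookup w i then mbinom u (w - unit_mon i) else 0)"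
proof -
  have A: "(\<Prod>j\<in>UNIV-{i}. lookup (u + unit_mon i) j choose lookup w j) = (\<Prod>j\<in>UNIV-{i}. lookup u j choose lookup w j)"
    by (rule prod.cong) (auto simp: lookup_add lookup_unit_mon)
  have B: "(\<Prod>j\<in>UNIV-{i}. lookup u j choose lookup (w - unit_mon i) j) = (\<Prod>j\<in>UNIV-{i}. lookup u j choose lookup w j)"
    by (rule prod.cong) (auto simp: lookup_minus lookup_unit_mon)
  show ?thesis
  proof (cases "lookup w i")
    case 0 then show ?thesis
      by (simp add: mbinom_split[of _ _ i] A lookup_add lookup_unit_mon)
  next
    case (Suc k)
    have C: "lookup (u + unit_mon i) i = Suc (lookup u i)" "lookup (w - unit_mon i) i = k"
      using Suc by (simp_all add: lookup_add lookup_minus lookup_unit_mon)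
    show ?thesis
      using mbinom_split[of "u + unit_mon i" w i] mbinom_split[of u w i] mbinom_split[of u "w - unit_mon i" i]
        A B C Suc by (simp add: add_mult_distrib)
  qed
qed

lemma mbinom_eq_0: "w \<notin> mon_divisors u \<Longrightarrow> mbinom u w = 0"
  unfolding mbinom_def mon_divisors_def by (auto simp: not_le intro!: prod_zero)

lemma mbinom_self [simp]: "mbinom u u = 1"
  by (simp add: mbinom_def)

lemma mbinom_0 [simp]: "mbinom u 0 = 1"
  by (simp add: mbinom_def)

lemma Dpow_zero_mon [simp]: "Dpow D 0 c = c"
  unfolding Dpow_def by (simp add: fold_id)

lemma Dpow_add:
  assumes "\<And>i a b. D i (a + b) = D i a + D i b"
  shows "Dpow D w (a + b) = Dpow D w a + Dpow D w b"
proof -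
  have "(D i ^^ n) (a + b) = (D i ^^ n) a + (D i ^^ n) b" for i n a b
    by (induction n) (auto simp: assms)
  then have "fold (\<lambda>i b. (D i ^^ lookup w i) b) xs (a + b)
      = fold (\<lambda>i b. (D i ^^ lookup w i) b) xs a + fold (\<lambda>i b. (D i ^^ lookup w i) b) xs b" for xs
    by (induction xs arbitrary: a b) simp_all
  then show ?thesis unfolding Dpow_def .
qed

lemma Dpow_add_unit_mon:
  assumes comm: "\<And>i j a. D i (D j a) = D j (D i a)"
  shows "Dpow D (w + unit_mon j) c = D j (Dpow D w c)"
proof -
  have D_fold: "D j (fold (\<lambda>i b. (D i ^^ f i) b) xs c) = fold (\<lambda>i b. (D i ^^ f i) b) xs (D j c)" for f xs c
  proof -
    have "D j ((D x ^^ n) c) = (D x ^^ n) (D j c)" for x n c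
      by (induction n) (simp_all, metis comm)
    then show ?thesis by (induction xs arbitrary: c) simp_all
  qed
  have "fold (\<lambda>i b. (D i ^^ lookup (w + unit_mon j) i) b) xs c = D j (fold (\<lambda>i b. (D i ^^ lookup w i) b) xs c)"
    if "distinct xs" "j \<in> set xs" for xs c
    using that
  proof (induction xs arbitrary: c)
    case (Cons x xs)
    show ?case
    proof (cases "x = j")
      case True
      with Cons have "j \<notin> set xs" by auto
      then have "fold (\<lambda>i b. (D i ^^ lookup (w + unit_mon j) i) b) xs c' = fold (\<lambda>i b. (D i ^^ lookup w i) b) xs c'" for c'
        by (intro fold_cong) (auto simp: lookup_add lookup_unit_mon)
      then show ?thesis using True by (simp add: lookup_add lookup_unit_mon D_fold)
    next
      case False
      then show ?thesis using Cons by (simp add: lookup_add lookup_unit_mon)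
    qed
  qed simp
  then show ?thesis unfolding Dpow_def by simp
qed

definition coeff_scale :: "'c::comm_ring_1 \<Rightarrow> ('a \<Rightarrow>\<^sub>0 'c) \<Rightarrow> ('a \<Rightarrow>\<^sub>0 'c)" where
  "coeff_scale q R = Poly_Mapping.map (\<lambda>a. q * a) R"

lemma lookup_coeff_scale [simp]: "lookup (coeff_scale q R) k = q * lookup R k"
  by (simp add: coeff_scale_def map.rep_eq when_def)

lemma coeff_scale_add: "coeff_scale q (R + S) = coeff_scale q R + coeff_scale q S"
  by (rule poly_mapping_eqI) (simp add: lookup_add algebra_simps)

lemma coeff_scale_add_left: "coeff_scale (q + r) S = coeff_scale q S + coeff_scale r S"
  by (rule poly_mapping_eqI) (simp add: lookup_add algebra_simps)

lemma coeff_scale_0 [simp]: "coeff_scale q 0 = 0"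
  by (rule poly_mapping_eqI) simp

lemma coeff_scale_0_left [simp]: "coeff_scale 0 R = 0"
  by (rule poly_mapping_eqI) simp

lemma coeff_scale_1 [simp]: "coeff_scale 1 R = R"
  by (rule poly_mapping_eqI) simp

lemma coeff_scale_coeff_scale: "coeff_scale q (coeff_scale r R) = coeff_scale (q * r) R"
  by (rule poly_mapping_eqI) (simp add: algebra_simps)

lemma coeff_scale_sum: "coeff_scale q (sum f A) = (\<Sum>x\<in>A. coeff_scale q (f x))"
  by (rule poly_mapping_eqI) (simp add: lookup_sum sum_distrib_left)

lemma coeff_scale_single: "coeff_scale q (single k c) = single k (q * c)"
  by (rule poly_mapping_eqI) (simp add: lookup_single when_def)

lemma keys_coeff_scale: "keys (coeff_scale q R) \<subseteq> keys R"
  by (auto simp: in_keys_iff)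

subsection \<open>Operator rings over a ring with commuting derivations\<close>

locale commuting_derivations =
  fixes D :: "'v::{finite,linorder} \<Rightarrow> 'c::comm_ring_1 \<Rightarrow> 'c"
  assumes D_add: "D i (a + b) = D i a + D i b"
    and D_mult: "D i (a * b) = a * D i b + D i a * b"
    and D_commute: "D i (D j a) = D j (D i a)"
begin

lemma D_zero [simp]: "D i 0 = 0"
  using D_add[of i 0 0] by simp

lemma D_diff: "D i (a - b) = D i a - D i b"
  using D_add[of i "a - b" b] by (simp add: eq_diff_eq)

lemma D_one [simp]: "D i 1 = 0"
  using D_mult[of i 1 1] by simp

lemma D_of_nat [simp]: "D i (of_nat n) = 0"
  by (induction n) (auto simp: D_add)

lemma Dpow_add_unit_mon_left: "Dpow D (w + unit_mon j) c = D j (Dpow D w c)"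
  by (rule Dpow_add_unit_mon) (rule D_commute)

lemma Dpow_add_right: "Dpow D w (a + b) = Dpow D w a + Dpow D w b"
  by (rule Dpow_add) (rule D_add)

lemma Dpow_0_right [simp]: "Dpow D w 0 = 0"
  using Dpow_add_right[of w 0 0] by simp

definition term_mult :: "'v mon \<Rightarrow> 'c \<Rightarrow> 'v mon \<Rightarrow> 'c \<Rightarrow> ('v, 'c) dop" where
  "term_mult u a v b = (\<Sum>w\<in>mon_divisors u. single (u - w + v) (of_nat (mbinom u w) * a * Dpow D w b))"

lemma dop_mult_term_mult: "dop_mult D P Q = (\<Sum>u\<in>keys P. \<Sum>v\<in>keys Q. term_mult u (lookup P u) v (lookup Q v))"
  unfolding dop_mult_def term_mult_def mon_divisors_def ..

lemma term_mult_0_left [simp]: "term_mult u 0 v b = 0"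
  by (simp add: term_mult_def)

lemma term_mult_0_right [simp]: "term_mult u a v 0 = 0"
  by (simp add: term_mult_def)

lemma term_mult_add_left: "term_mult u (a + a') v b = term_mult u a v b + term_mult u a' v b"
  by (simp add: term_mult_def sum.distrib[symmetric] single_add[symmetric] algebra_simps)

lemma term_mult_add_right: "term_mult u a v (b + b') = term_mult u a v b + term_mult u a v b'"
  by (simp add: term_mult_def sum.distrib[symmetric] single_add[symmetric] algebra_simps Dpow_add_right)

lemma term_mult_scale: "term_mult u (q * a) v b = coeff_scale q (term_mult u a v b)"
  by (simp add: term_mult_def coeff_scale_sum coeff_scale_single algebra_simps)

lemma dop_mult_superset:
  assumes "finite A" "keys P \<subseteq> A" "finite B" "keys Q \<subseteq> B"
  shows "dop_mult D P Q = (\<Sum>u\<in>A. \<Sum>v\<in>B. term_mult u (lookup P u) v (lookup Q v))"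
proof -
  have "dop_mult D P Q = (\<Sum>u\<in>A. \<Sum>v\<in>keys Q. term_mult u (lookup P u) v (lookup Q v))"
    unfolding dop_mult_term_mult using assms by (intro sum.mono_neutral_left) (auto simp: in_keys_iff)
  also have "\<dots> = (\<Sum>u\<in>A. \<Sum>v\<in>B. term_mult u (lookup P u) v (lookup Q v))"
    using assms by (intro sum.cong refl sum.mono_neutral_left) (auto simp: in_keys_iff)
  finally show ?thesis .
qed

lemma dop_mult_add_left: "dop_mult D (P + P') Q = dop_mult D P Q + dop_mult D P' Q"
  using keys_add[of P P']
  by (simp add: dop_mult_superset[of "keys P \<union> keys P'" _ "keys Q"] lookup_add term_mult_add_left sum.distrib)

lemma dop_mult_add_right: "dop_mult D P (Q + Q') = dop_mult D P Q + dop_mult D P Q'"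
  using keys_add[of Q Q']
  by (simp add: dop_mult_superset[of "keys P" _ "keys Q \<union> keys Q'"] lookup_add term_mult_add_right sum.distrib)

lemma dop_mult_0_left [simp]: "dop_mult D 0 Q = 0"
  by (simp add: dop_mult_term_mult)

lemma dop_mult_0_right [simp]: "dop_mult D P 0 = 0"
  by (simp add: dop_mult_term_mult)

lemma dop_mult_sum_left: "dop_mult D (sum f A) Q = (\<Sum>x\<in>A. dop_mult D (f x) Q)"
  by (induction A rule: infinite_finite_induct) (auto simp: dop_mult_add_left)

lemma dop_mult_sum_right: "dop_mult D P (sum f A) = (\<Sum>x\<in>A. dop_mult D P (f x))"
  by (induction A rule: infinite_finite_induct) (auto simp: dop_mult_add_right)

lemma dop_mult_coeff_scale_left: "dop_mult D (coeff_scale q P) Q = coeff_scale q (dop_mult D P Q)"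
  by (simp add: dop_mult_superset[of "keys P" _ "keys Q"] keys_coeff_scale term_mult_scale coeff_scale_sum)

lemma dop_mult_single_left: "dop_mult D (single u a) Q = (\<Sum>v\<in>keys Q. term_mult u a v (lookup Q v))"
  by (simp add: dop_mult_superset[of "{u}" _ "keys Q"])

lemma dop_mult_single_single: "dop_mult D (single u a) (single v b) = term_mult u a v b"
  by (simp add: dop_mult_superset[of "{u}" _ "{v}"])

lemma dop_mult_const_left: "dop_mult D (single 0 q) R = coeff_scale q R"
proof -
  have "term_mult 0 q v b = single v (q * b)" for v b
    by (simp add: term_mult_def mon_divisors_zero)
  then show ?thesis
    by (simp add: dop_mult_single_left coeff_scale_single[symmetric] coeff_scale_sum[symmetric]
                  poly_mapping_sum_single[symmetric])
qed

lemma dop_mult_1_left: "dop_mult D 1 R = R"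
  using dop_mult_const_left[of 1 R] by simp

definition partial_mult :: "'v \<Rightarrow> ('v, 'c) dop \<Rightarrow> ('v, 'c) dop" where
  "partial_mult i R = dop_mult D (single (unit_mon i) 1) R"

lemma term_mult_unit_mon: "term_mult (unit_mon i) a v b = single (unit_mon i + v) (a * b) + single v (a * D i b)"
proof -
  have "Dpow D (unit_mon i) b = D i b" using Dpow_add_unit_mon_left[of 0 i b] by simp
  then show ?thesis by (simp add: term_mult_def mon_divisors_unit_mon)
qed

lemma partial_mult_single: "partial_mult i (single k c) = single (unit_mon i + k) c + single k (D i c)"
  by (simp add: partial_mult_def dop_mult_single_single term_mult_unit_mon)

lemma partial_mult_add: "partial_mult i (R + S) = partial_mult i R + partial_mult i S"
  by (simp add: partial_mult_def dop_mult_add_right)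

lemma partial_mult_sum: "partial_mult i (sum f A) = (\<Sum>x\<in>A. partial_mult i (f x))"
  by (simp add: partial_mult_def dop_mult_sum_right)

lemma partial_mult_0 [simp]: "partial_mult i 0 = 0"
  by (simp add: partial_mult_def)

lemma partial_mult_eq_sum:
  "partial_mult i R = (\<Sum>v\<in>keys R. single (unit_mon i + v) (lookup R v) + single v (D i (lookup R v)))"
  by (simp add: partial_mult_def dop_mult_single_left term_mult_unit_mon)

lemma partial_mult_term_mult:
  "partial_mult i (term_mult u a v b) = term_mult (u + unit_mon i) a v b + term_mult u (D i a) v b"
proof -
  let ?t = "\<lambda>w c. single (u + unit_mon i - w + v) (of_nat c * a * Dpow D w b)"
  have D_coeff: "D i (of_nat n * a * Dpow D w b)
      = of_nat n * a * Dpow D (w + unit_mon i) b + of_nat n * D i a * Dpow D w b" for n w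
    by (simp only: D_mult D_of_nat mult_zero_left add_0_right Dpow_add_unit_mon_left)
  have lhs: "partial_mult i (term_mult u a v b) =
       (\<Sum>w\<in>mon_divisors u. single (unit_mon i + (u - w + v)) (of_nat (mbinom u w) * a * Dpow D w b))
     + (\<Sum>w\<in>mon_divisors u. single (u - w + v) (of_nat (mbinom u w) * a * Dpow D (w + unit_mon i) b))
     + term_mult u (D i a) v b"
    by (simp add: term_mult_def partial_mult_sum partial_mult_single D_coeff single_add sum.distrib add.assoc)
  have "term_mult (u + unit_mon i) a v b = (\<Sum>w\<in>mon_divisors (u + unit_mon i).
      ?t w (mbinom u w) + (if 0 < lookup w i then ?t w (mbinom u (w - unit_mon i)) else 0))"
    unfolding term_mult_def mbinom_add_unit_mon
    by (intro sum.cong) (auto simp: single_add[symmetric] distrib_right)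
  then have pascal: "term_mult (u + unit_mon i) a v b = (\<Sum>w\<in>mon_divisors (u + unit_mon i). ?t w (mbinom u w))
      + (\<Sum>w\<in>{w \<in> mon_divisors (u + unit_mon i). 0 < lookup w i}. ?t w (mbinom u (w - unit_mon i)))"
    by (simp add: sum.distrib sum.inter_filter finite_mon_divisors)
  have "(\<Sum>w\<in>mon_divisors (u + unit_mon i). ?t w (mbinom u w))
      = (\<Sum>w\<in>mon_divisors u. single (unit_mon i + (u - w + v)) (of_nat (mbinom u w) * a * Dpow D w b))"
    by (subst sum.mono_neutral_right[of _ "mon_divisors u"])
       (auto simp: finite_mon_divisors mon_divisors_mono mbinom_eq_0 mon_divisors_diff_add intro!: sum.cong)
  moreover have "(\<Sum>w\<in>{w \<in> mon_divisors (u + unit_mon i). 0 < lookup w i}. ?t w (mbinom u (w - unit_mon i)))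
      = (\<Sum>w\<in>mon_divisors u. single (u - w + v) (of_nat (mbinom u w) * a * Dpow D (w + unit_mon i) b))"
    by (rule sum.reindex_bij_betw[OF mon_divisors_add_unit_mon, symmetric, THEN trans]) simp
  ultimately show ?thesis using lhs pascal by simp
qed

lemma partial_mult_dop_mult: "partial_mult i (dop_mult D P Q) = dop_mult D (partial_mult i P) Q"
proof -
  have "partial_mult i (dop_mult D P Q) = (\<Sum>u\<in>keys P. \<Sum>v\<in>keys Q.
      term_mult (u + unit_mon i) (lookup P u) v (lookup Q v) + term_mult u (D i (lookup P u)) v (lookup Q v))"
    by (simp add: dop_mult_term_mult partial_mult_sum partial_mult_term_mult)
  also have "\<dots> = dop_mult D (partial_mult i P) Q"
    by (simp add: partial_mult_eq_sum[of i P] dop_mult_sum_left dop_mult_add_left dop_mult_single_left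
                  sum.distrib add.commute)
  finally show ?thesis .
qed

lemma partial_mult_coeff_scale:
  "partial_mult i (coeff_scale q S) = coeff_scale q (partial_mult i S) + coeff_scale (D i q) S"
proof -
  have "partial_mult i (coeff_scale q S) = partial_mult i (dop_mult D (single 0 q) S)"
    by (simp add: dop_mult_const_left)
  also have "\<dots> = dop_mult D (partial_mult i (single 0 q)) S"
    by (rule partial_mult_dop_mult)
  also have "\<dots> = dop_mult D (coeff_scale q (single (unit_mon i) 1)) S + coeff_scale (D i q) S"
    by (simp add: partial_mult_single dop_mult_add_left dop_mult_const_left coeff_scale_single)
  also have "\<dots> = coeff_scale q (partial_mult i S) + coeff_scale (D i q) S"
    by (simp add: dop_mult_coeff_scale_left partial_mult_def)
  finally show ?thesis .
qed

lemma partial_mult_commute: "partial_mult i (partial_mult j R) = partial_mult j (partial_mult i R)"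
proof -
  have "partial_mult i (partial_mult j R) = dop_mult D (single (unit_mon i + unit_mon j) 1) R"
    unfolding partial_mult_def[of j R] by (simp add: partial_mult_dop_mult partial_mult_single)
  also have "\<dots> = partial_mult j (partial_mult i R)"
    unfolding partial_mult_def[of i R] by (simp add: partial_mult_dop_mult partial_mult_single add.commute)
  finally show ?thesis .
qed

lemma lookup_partial_mult:
  "lookup (partial_mult i R) w = (if 0 < lookup w i then lookup R (w - unit_mon i) else 0) + D i (lookup R w)"
proof -
  have "lookup (partial_mult i R) w = (\<Sum>v\<in>keys R. if unit_mon i + v = w then lookup R v else 0)
      + (\<Sum>v\<in>keys R. if v = w then D i (lookup R v) else 0)"
    by (simp add: partial_mult_eq_sum lookup_sum lookup_add lookup_single when_def sum.distrib)
  also have "(\<Sum>v\<in>keys R. if unit_mon i + v = w then lookup R v else 0)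
      = (\<Sum>v\<in>keys R. if v = w - unit_mon i then (if 0 < lookup w i then lookup R v else 0) else 0)"
    by (rule sum.cong) (auto simp: unit_mon_add_eq_iff)
  finally show ?thesis by (simp add: in_keys_iff)
qed

end

lemma lookup_mp_deriv: "lookup (mp_deriv i p) k = of_nat (lookup k i + 1) * lookup p (k + unit_mon i)"
proof -
  have "lookup (mp_deriv i p) k = (\<Sum>m\<in>keys p. if m - unit_mon i = k then of_nat (lookup m i) * lookup p m else 0)"
    unfolding mp_deriv_def unit_mon_def[symmetric] by (simp add: lookup_sum lookup_single when_def)
  also have "\<dots> = (\<Sum>m\<in>keys p. if m = k + unit_mon i then of_nat (lookup m i) * lookup p m else 0)"
  proof (rule sum.cong[OF refl])
    fix m
    have "m - unit_mon i = k \<Longrightarrow> m \<noteq> k + unit_mon i \<Longrightarrow> lookup m i = 0"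
      using mon_diff_add_unit_mon[of m i] by (metis gr0I)
    then show "(if m - unit_mon i = k then of_nat (lookup m i) * lookup p m else 0)
        = (if m = k + unit_mon i then of_nat (lookup m i) * lookup p m else 0)"
      by auto
  qed
  also have "\<dots> = of_nat (lookup k i + 1) * lookup p (k + unit_mon i)"
    by (simp add: lookup_add lookup_unit_mon in_keys_iff)
  finally show ?thesis .
qed

lemma mp_deriv_add: "mp_deriv i (p + q) = mp_deriv i p + mp_deriv i q"
  by (rule poly_mapping_eqI) (simp add: lookup_mp_deriv lookup_add algebra_simps)

lemma mp_deriv_0 [simp]: "mp_deriv i 0 = 0"
  using mp_deriv_add[of i 0 0] by simp

lemma mp_deriv_sum: "mp_deriv i (sum f A) = (\<Sum>x\<in>A. mp_deriv i (f x))"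
  by (induction A rule: infinite_finite_induct) (auto simp: mp_deriv_add)

lemma mp_deriv_commute: "mp_deriv i (mp_deriv j p) = mp_deriv j (mp_deriv i p)"
  by (cases "i = j") (auto intro!: poly_mapping_eqI simp: lookup_mp_deriv lookup_add lookup_unit_mon add_ac mult_ac)

lemma mp_deriv_single: "mp_deriv i (single m c) = single (m - unit_mon i) (of_nat (lookup m i) * c)"
proof (rule poly_mapping_eqI)
  fix k
  have "m - unit_mon i = k \<Longrightarrow> m \<noteq> k + unit_mon i \<Longrightarrow> lookup m i = 0"
    using mon_diff_add_unit_mon[of m i] by (metis gr0I)
  then show "lookup (mp_deriv i (single m c)) k = lookup (single (m - unit_mon i) (of_nat (lookup m i) * c)) k"
    by (cases "m = k + unit_mon i") (auto simp: lookup_mp_deriv lookup_single lookup_add lookup_unit_mon when_def)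
qed

lemma mp_deriv_mult_single:
  "mp_deriv i (single a c * single b d) = single a c * mp_deriv i (single b d) + mp_deriv i (single a c) * single b d"
proof -
  have "single a c * mp_deriv i (single b d) = single (a + b - unit_mon i) (of_nat (lookup b i) * (c * d))"
    by (cases "lookup b i = 0") (simp_all add: mp_deriv_single mult_single mon_add_diff_unit_mon algebra_simps)
  moreover have "mp_deriv i (single a c) * single b d = single (a + b - unit_mon i) (of_nat (lookup a i) * (c * d))"
  proof (cases "lookup a i = 0")
    case False
    then have "a - unit_mon i + b = a + b - unit_mon i" by (simp add: mon_diff_unit_mon_add)
    then show ?thesis by (simp add: mp_deriv_single mult_single algebra_simps)
  qed (simp add: mp_deriv_single)
  ultimately show ?thesis
    by (simp add: mult_single mp_deriv_single lookup_add algebra_simps single_add)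
qed

lemma mp_deriv_mult: "mp_deriv i (p * q) = p * mp_deriv i q + mp_deriv i p * q"
proof -
  let ?P = "\<lambda>a. single a (lookup p a)" and ?Q = "\<lambda>b. single b (lookup q b)"
  have "mp_deriv i (sum ?P (keys p) * sum ?Q (keys q))
      = sum ?P (keys p) * mp_deriv i (sum ?Q (keys q)) + mp_deriv i (sum ?P (keys p)) * sum ?Q (keys q)"
    by (simp add: sum_product mp_deriv_sum mp_deriv_mult_single sum.distrib)
  then show ?thesis by (simp only: poly_mapping_sum_single[symmetric])
qed

interpretation mpd: commuting_derivations "mp_deriv :: 'v::{finite,linorder} \<Rightarrow> ('v, 'k::comm_ring_1) mpoly \<Rightarrow> _"
  by unfold_locales (auto simp: mp_deriv_add mp_deriv_mult mp_deriv_commute)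

lemma rf_deriv_Fract:
  fixes a b :: "('v::{finite,linorder}, 'k::field_char_0) mpoly"
  assumes "b \<noteq> 0"
  shows "rf_deriv i (Fract a b) = Fract (mp_deriv i a * b - a * mp_deriv i b) (b * b)"
  unfolding rf_deriv_def
proof (rule the_equality)
  have "Fract (mp_deriv i a * b - a * mp_deriv i b) (b * b) = Fract (mp_deriv i c * d - c * mp_deriv i d) (d * d)"
    if d: "d \<noteq> 0" and eq: "a * d = c * b" for c d
  proof -
    have "a * mp_deriv i d + mp_deriv i a * d = c * mp_deriv i b + mp_deriv i c * b"
      using arg_cong[OF eq, of "mp_deriv i"] by (simp add: mp_deriv_mult)
    moreover have "(mp_deriv i a * b - a * mp_deriv i b) * (d * d) - (mp_deriv i c * d - c * mp_deriv i d) * (b * b)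
      = b * d * ((a * mp_deriv i d + mp_deriv i a * d) - (c * mp_deriv i b + mp_deriv i c * b))
        - (a * d - c * b) * (mp_deriv i b * d + b * mp_deriv i d)"
      by (simp add: algebra_simps)
    ultimately have "(mp_deriv i a * b - a * mp_deriv i b) * (d * d) = (mp_deriv i c * d - c * mp_deriv i d) * (b * b)"
      using eq by simp
    then show ?thesis using assms d by (simp add: eq_fract)
  qed
  then show "\<forall>c d. d \<noteq> 0 \<longrightarrow> Fract a b = Fract c d \<longrightarrow>
      Fract (mp_deriv i a * b - a * mp_deriv i b) (b * b) = Fract (mp_deriv i c * d - c * mp_deriv i d) (d * d)"
    using assms by (simp add: eq_fract)
qed (use assms in blast)

lemma rf_deriv_Fract_1: "rf_deriv i (Fract a 1) = Fract (mp_deriv i a) 1"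
  by (simp add: rf_deriv_Fract)

lemma rf_deriv_add: "rf_deriv i (q + r) = rf_deriv i q + rf_deriv i (r :: ('v::{finite,linorder}, 'k::field_char_0) mpoly fract)"
  by (cases q, cases r) (simp add: rf_deriv_Fract eq_fract mp_deriv_add mp_deriv_mult mpd.D_diff algebra_simps)

lemma rf_deriv_mult: "rf_deriv i (q * r) = q * rf_deriv i r + rf_deriv i q * (r :: ('v::{finite,linorder}, 'k::field_char_0) mpoly fract)"
  by (cases q, cases r) (simp add: rf_deriv_Fract eq_fract mp_deriv_add mp_deriv_mult mpd.D_diff algebra_simps)

lemma rf_deriv_commute: "rf_deriv i (rf_deriv j q) = rf_deriv j (rf_deriv i (q :: ('v::{finite,linorder}, 'k::field_char_0) mpoly fract))"
proof (cases q)
  case (Fract a b)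
  have "mp_deriv i (mp_deriv j a * b - a * mp_deriv j b) * (b * b) - (mp_deriv j a * b - a * mp_deriv j b) * mp_deriv i (b * b)
      = mp_deriv j (mp_deriv i a * b - a * mp_deriv i b) * (b * b) - (mp_deriv i a * b - a * mp_deriv i b) * mp_deriv j (b * b)"
    by (simp add: mp_deriv_add mp_deriv_mult mpd.D_diff mp_deriv_commute[of j i] algebra_simps)
  then show ?thesis using Fract by (simp add: rf_deriv_Fract)
qed

interpretation rfd: commuting_derivations "rf_deriv :: 'v::{finite,linorder} \<Rightarrow> ('v, 'k::field_char_0) mpoly fract \<Rightarrow> _"
  by unfold_locales (auto simp: rf_deriv_add rf_deriv_mult rf_deriv_commute)

definition euler_mult :: "'v::{finite,linorder} \<Rightarrow> ('v, ('v, 'k::field_char_0) mpoly) dop \<Rightarrow> ('v, ('v, 'k) mpoly) dop" where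
  "euler_mult i R = coeff_scale (single (unit_mon i) 1) (mpd.partial_mult i R)"

lemma euler_mult_add: "euler_mult j (R + S) = euler_mult j R + euler_mult j S"
  by (simp add: euler_mult_def mpd.partial_mult_add coeff_scale_add)

lemma euler_mult_0 [simp]: "euler_mult j 0 = 0"
  by (simp add: euler_mult_def)

lemma euler_mult_sum: "euler_mult j (sum f A) = (\<Sum>x\<in>A. euler_mult j (f x))"
  by (induction A rule: infinite_finite_induct) (auto simp: euler_mult_add)

lemma pmult_euler: "pmult (euler i) R = euler_mult i R"
proof -
  have E: "euler i = coeff_scale (single (unit_mon i) 1) (single (unit_mon i) 1)"
    by (simp add: euler_def unit_mon_def coeff_scale_single)
  show ?thesis unfolding E euler_mult_def by (simp add: mpd.dop_mult_coeff_scale_left mpd.partial_mult_def)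
qed

lemma pmult_euler_mult: "pmult (euler_mult i A) R = euler_mult i (pmult A R)"
  by (simp add: euler_mult_def mpd.dop_mult_coeff_scale_left mpd.partial_mult_dop_mult)

lemma pmult_euler_funpow: "pmult ((pmult (euler i) ^^ k) 1) R = (euler_mult i ^^ k) R"
  by (induction k) (simp_all add: mpd.dop_mult_1_left pmult_euler pmult_euler_mult)

lemma delta_pow_eq_Dpow: "delta_pow u = Dpow euler_mult u 1"
  unfolding delta_pow_def Dpow_def by (intro fold_cong) (simp_all add: fun_eq_iff pmult_euler_funpow)

lemma euler_mult_commute:
  fixes R :: "('v::{finite,linorder}, ('v, 'k::field_char_0) mpoly) dop"
  shows "euler_mult i (euler_mult j R) = euler_mult j (euler_mult i R)"
proof (cases "i = j")
  case False
  then have "mp_deriv i (single (unit_mon j) (1::'k)) = 0" "mp_deriv j (single (unit_mon i) (1::'k)) = 0"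
    by (simp_all add: mp_deriv_single lookup_unit_mon)
  then have "euler_mult i (euler_mult j R)
      = coeff_scale (single (unit_mon i) 1 * single (unit_mon j) 1) (mpd.partial_mult i (mpd.partial_mult j R))"
    "euler_mult j (euler_mult i R)
      = coeff_scale (single (unit_mon j) 1 * single (unit_mon i) 1) (mpd.partial_mult j (mpd.partial_mult i R))"
    by (simp_all add: euler_mult_def mpd.partial_mult_coeff_scale coeff_scale_add coeff_scale_coeff_scale)
  then show ?thesis by (simp add: mpd.partial_mult_commute mult.commute)
qed simp

lemma delta_pow_0: "delta_pow 0 = 1"
  unfolding delta_pow_eq_Dpow by simp

lemma delta_pow_add_unit_mon: "delta_pow (u + unit_mon j) = euler_mult j (delta_pow u)"
  unfolding delta_pow_eq_Dpow by (rule Dpow_add_unit_mon) (rule euler_mult_commute)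

lemma euler_mult_const: "euler_mult i (coeff_scale (single 0 k) R) = coeff_scale (single 0 k) (euler_mult i R)"
  by (simp add: euler_mult_def mpd.partial_mult_coeff_scale mp_deriv_single coeff_scale_add coeff_scale_coeff_scale mult.commute)

lemma single_mult_of_nat: "single v (k::'k::comm_ring_1) * of_nat n = single v (k * of_nat n)"
  by (subst single_of_nat[symmetric]) (simp only: mult_single add_0_right)

lemma of_nat_mult_single: "of_nat n * single v (k::'k::comm_ring_1) = single v (of_nat n * k)"
  by (subst single_of_nat[symmetric]) (simp only: mult_single add_0_left)

lemma x_mult_mp_deriv_single: "single (unit_mon i) 1 * mp_deriv i (single v (1::'k::comm_ring_1)) = single v (of_nat (lookup v i))"
proof (cases "lookup v i = 0")
  case False
  then have "unit_mon i + (v - unit_mon i) = v" using mon_diff_add_unit_mon[of v i] by (simp add: add.commute)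
  then show ?thesis by (simp add: mp_deriv_single mult_single)
qed (simp add: mp_deriv_single)

lemma euler_mult_xmon:
  "euler_mult i (coeff_scale (single v 1) R)
     = coeff_scale (single v 1) (euler_mult i R) + coeff_scale (single 0 (of_nat (lookup v i))) (coeff_scale (single v 1) R)"
  by (simp add: euler_mult_def mpd.partial_mult_coeff_scale coeff_scale_add coeff_scale_coeff_scale
                x_mult_mp_deriv_single[symmetric] mult_single single_mult_of_nat mult_ac)

lemma lookup_euler_mult:
  "lookup (euler_mult j R) w
     = single (unit_mon j) 1 * ((if 0 < lookup w j then lookup R (w - unit_mon j) else 0) + mp_deriv j (lookup R w))"
  by (simp add: euler_mult_def mpd.lookup_partial_mult)

lemma keys_delta_pow: "keys (delta_pow u :: ('v::{finite,linorder}, ('v, 'k::field_char_0) mpoly) dop) \<subseteq> mon_divisors u"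
proof (induction u rule: mon_induct)
  case zero
  then show ?case by (simp add: delta_pow_0 mon_divisors_zero)
next
  case (add_unit u j)
  let ?R = "delta_pow u :: ('v, ('v, 'k) mpoly) dop"
  show ?case
  proof
    fix w assume "w \<in> keys (delta_pow (u + unit_mon j) :: ('v, ('v, 'k) mpoly) dop)"
    then have "single (unit_mon j) 1 * ((if 0 < lookup w j then lookup ?R (w - unit_mon j) else 0)
        + mp_deriv j (lookup ?R w)) \<noteq> 0"
      by (simp add: in_keys_iff delta_pow_add_unit_mon lookup_euler_mult)
    then have "w \<in> keys ?R \<or> (0 < lookup w j \<and> w - unit_mon j \<in> keys ?R)"
      by (cases "0 < lookup w j") (auto simp: in_keys_iff)
    then show "w \<in> mon_divisors (u + unit_mon j)"
    proof (elim disjE conjE)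
      assume "w \<in> keys ?R"
      then show ?thesis using add_unit mon_divisors_mono[of u j] by blast
    next
      assume pos: "0 < lookup w j" and "w - unit_mon j \<in> keys ?R"
      then have "w - unit_mon j \<in> mon_divisors u" using add_unit by blast
      then have "w - unit_mon j + unit_mon j \<in> mon_divisors (u + unit_mon j)"
        by (simp add: mon_divisors_def lookup_add)
      then show ?thesis using mon_diff_add_unit_mon[OF pos] by simp
    qed
  qed
qed

lemma lookup_delta_pow_self:
  "lookup (delta_pow u :: ('v::{finite,linorder}, ('v, 'k::field_char_0) mpoly) dop) u = single u 1"
proof (induction u rule: mon_induct)
  case zero
  then show ?case by (simp add: delta_pow_0 lookup_one)
next
  case (add_unit u j)
  have "u + unit_mon j \<notin> mon_divisors u"
    by (auto simp: mon_divisors_def lookup_add lookup_unit_mon dest: spec[of _ j])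
  then have "lookup (delta_pow u :: ('v, ('v, 'k) mpoly) dop) (u + unit_mon j) = 0"
    using keys_delta_pow[of u] by (auto simp: in_keys_iff)
  then show ?case using add_unit
    by (simp add: delta_pow_add_unit_mon lookup_euler_mult lookup_add lookup_unit_mon mult_single add.commute)
qed

subsection \<open>Expansions in the Euler basis\<close>

(* A coefficient family c :: 'v mon \<Rightarrow> 'v mon \<Rightarrow> 'k stands for the operator
   \<Sum> c v u x\<^sup>v \<delta>\<^sup>u, as in the definition of ind_coeffs. *)

definition euler_term :: "'v::{finite,linorder} mon \<Rightarrow> 'v mon \<Rightarrow> 'k::field_char_0 \<Rightarrow> ('v, ('v, 'k) mpoly) dop" where
  "euler_term v u k = coeff_scale (single v 1) (coeff_scale (single 0 k) (delta_pow u))"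

definition coeff_support :: "('a \<Rightarrow> 'b \<Rightarrow> 'k::zero) \<Rightarrow> ('a \<times> 'b) set" where
  "coeff_support c = {(v, u). c v u \<noteq> 0}"

definition euler_sum :: "('v::{finite,linorder} mon \<Rightarrow> 'v mon \<Rightarrow> 'k::field_char_0) \<Rightarrow> ('v, ('v, 'k) mpoly) dop" where
  "euler_sum c = (\<Sum>(v, u)\<in>coeff_support c. euler_term v u (c v u))"

lemma euler_term_0 [simp]: "euler_term v u 0 = 0"
  by (simp add: euler_term_def)

lemma euler_term_add: "euler_term v u (a + b) = euler_term v u a + euler_term v u b"
  by (simp add: euler_term_def single_add coeff_scale_add_left coeff_scale_add)

lemma euler_term_diff: "euler_term v u (a - b) = euler_term v u a - euler_term v u b"
  using euler_term_add[of v u "a - b" b] by (simp add: eq_diff_eq)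

lemma euler_term_scale: "euler_term v u (s * k) = coeff_scale (single 0 s) (euler_term v u k)"
  by (simp add: euler_term_def coeff_scale_coeff_scale mult_single mult.commute)

lemma euler_term_shift: "coeff_scale (single a 1) (euler_term v u k) = euler_term (a + v) u k"
  by (simp add: euler_term_def coeff_scale_coeff_scale mult_single)

lemma euler_mult_euler_term:
  "euler_mult j (euler_term v u k) = euler_term v (u + unit_mon j) k + euler_term v u (of_nat (lookup v j) * k)"
  unfolding euler_term_def euler_mult_xmon euler_mult_const delta_pow_add_unit_mon
  by (simp add: coeff_scale_coeff_scale mult_single mult.commute single_mult_of_nat)

lemma lookup_euler_term: "lookup (euler_term v u k) w = single v 1 * (single 0 k * lookup (delta_pow u) w)"
  by (simp add: euler_term_def)

lemma euler_sum_superset: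
  assumes "finite S" "coeff_support c \<subseteq> S"
  shows "euler_sum c = (\<Sum>(v, u)\<in>S. euler_term v u (c v u))"
  unfolding euler_sum_def using assms by (intro sum.mono_neutral_left) (auto simp: coeff_support_def)

lemma coeff_support_add_subset:
  fixes c1 c2 :: "'a \<Rightarrow> 'b \<Rightarrow> 'k::comm_monoid_add"
  shows "coeff_support (c1 + c2) \<subseteq> coeff_support c1 \<union> coeff_support c2"
  by (auto simp: coeff_support_def)

lemma finite_coeff_support_add:
  fixes c1 c2 :: "'a \<Rightarrow> 'b \<Rightarrow> 'k::comm_monoid_add"
  shows "finite (coeff_support c1) \<Longrightarrow> finite (coeff_support c2) \<Longrightarrow> finite (coeff_support (c1 + c2))"
  using coeff_support_add_subset by (metis finite_Un finite_subset)

lemma finite_coeff_support_mult: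
  fixes c :: "'a \<Rightarrow> 'b \<Rightarrow> 'k::mult_zero"
  shows "finite (coeff_support c) \<Longrightarrow> finite (coeff_support (\<lambda>v u. a v * c v u))"
  by (erule finite_subset[rotated]) (auto simp: coeff_support_def)

lemma euler_sum_add:
  assumes "finite (coeff_support c1)" "finite (coeff_support c2)"
  shows "euler_sum (c1 + c2) = euler_sum c1 + euler_sum c2"
proof -
  let ?S = "coeff_support c1 \<union> coeff_support c2"
  show ?thesis using assms coeff_support_add_subset[of c1 c2]
    by (simp add: euler_sum_superset[of ?S] euler_term_add case_prod_beta sum.distrib)
qed

lemma euler_sum_scale:
  assumes "finite (coeff_support c)"
  shows "euler_sum (\<lambda>v u. s * c v u) = coeff_scale (single 0 s) (euler_sum c)"
proof -
  have "coeff_support (\<lambda>v u. s * c v u) \<subseteq> coeff_support c" by (auto simp: coeff_support_def)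
  then show ?thesis using assms
    by (simp add: euler_sum_superset[of "coeff_support c"] euler_term_scale case_prod_beta coeff_scale_sum)
qed

lemma euler_sum_eq_0_imp_coeffs_eq_0:
  fixes c :: "'v::{finite,linorder} mon \<Rightarrow> 'v mon \<Rightarrow> 'k::field_char_0"
  assumes S: "finite S" and Z: "(\<Sum>(v, u)\<in>S. euler_term v u (c v u)) = 0"
  shows "\<forall>(v, u)\<in>S. c v u = 0"
proof (rule ccontr)
  assume "\<not> (\<forall>(v, u)\<in>S. c v u = 0)"
  define U where "U = {u. \<exists>v. (v, u) \<in> S \<and> c v u \<noteq> 0}"
  have finU: "finite U" unfolding U_def
    by (rule finite_subset[OF _ finite_imageI[OF S, of snd]]) force
  have "tdeg ` U \<noteq> {}" using \<open>\<not> (\<forall>(v, u)\<in>S. c v u = 0)\<close> by (auto simp: U_def)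
  then have "Max (tdeg ` U) \<in> tdeg ` U" using Max_in finite_imageI[OF finU] by blast
  then obtain us where us: "us \<in> U" "tdeg us = Max (tdeg ` U)" by (metis imageE)
  then have us_max: "tdeg u \<le> tdeg us" if "u \<in> U" for u
    using finU that by simp
  obtain vs where vs: "(vs, us) \<in> S" "c vs us \<noteq> 0" using us(1) by (auto simp: U_def)
  (* \<delta>\<^sup>u only involves \<partial>\<^sup>w with w \<le> u, so among the terms only those with u = us reach \<partial>^us. *)
  have top: "single v 1 * (single 0 (c v u) * lookup (delta_pow u :: ('v, ('v, 'k) mpoly) dop) us)
      = (if u = us then single (v + us) (c v u) else 0)" if "(v, u) \<in> S" for v u
  proof (cases "c v u = 0 \<or> u = us")
    case True then show ?thesis by (auto simp: lookup_delta_pow_self mult_single)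
  next
    case False
    then have "tdeg u \<le> tdeg us" using that us_max by (auto simp: U_def)
    then have "us \<notin> mon_divisors u" using False tdeg_less_if_mon_divisor[of us u] by auto
    then have "lookup (delta_pow u :: ('v, ('v, 'k) mpoly) dop) us = 0"
      using keys_delta_pow[of u] by (auto simp: in_keys_iff)
    then show ?thesis using False by simp
  qed
  have "0 = lookup (lookup (\<Sum>(v, u)\<in>S. euler_term v u (c v u)) us) (vs + us)" using Z by simp
  also have "\<dots> = (\<Sum>x\<in>S. if x = (vs, us) then c vs us else 0)"
    by (auto simp: lookup_sum lookup_euler_term top lookup_single when_def intro!: sum.cong)
  also have "\<dots> = c vs us" using vs S by simp
  finally show False using vs by simp
qed

lemma euler_sum_inject:
  fixes c1 c2 :: "'v::{finite,linorder} mon \<Rightarrow> 'v mon \<Rightarrow> 'k::field_char_0"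
  assumes "finite (coeff_support c1)" "finite (coeff_support c2)" "euler_sum c1 = euler_sum c2"
  shows "c1 = c2"
proof -
  let ?S = "coeff_support c1 \<union> coeff_support c2"
  have "(\<Sum>(v, u)\<in>?S. euler_term v u (c1 v u - c2 v u)) = euler_sum c1 - euler_sum c2"
    using assms(1,2)
    by (simp add: euler_sum_superset[of ?S c1] euler_sum_superset[of ?S c2] euler_term_diff case_prod_beta sum_subtractf)
  then have "\<forall>(v, u)\<in>?S. c1 v u - c2 v u = 0"
    using assms by (intro euler_sum_eq_0_imp_coeffs_eq_0) auto
  then show ?thesis by (intro ext) (auto simp: coeff_support_def)
qed

definition shift_coeffs :: "'v mon \<Rightarrow> ('v mon \<Rightarrow> 'v mon \<Rightarrow> 'k::zero) \<Rightarrow> 'v mon \<Rightarrow> 'v mon \<Rightarrow> 'k" where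
  "shift_coeffs a c v u = (if \<exists>v'. v = a + v' then c (v - a) u else 0)"

lemma shift_coeffs_add [simp]: "shift_coeffs a c (a + v) = c v"
  by (rule ext) (auto simp: shift_coeffs_def)

lemma coeff_support_shift_coeffs: "coeff_support (shift_coeffs a c) = (\<lambda>(v, u). (a + v, u)) ` coeff_support c"
  by (force simp: coeff_support_def shift_coeffs_def split: if_splits)

lemma euler_sum_shift:
  assumes "finite (coeff_support c)"
  shows "coeff_scale (single a 1) (euler_sum c) = euler_sum (shift_coeffs a c)"
proof -
  let ?g = "\<lambda>(v, u). (a + v, u)" and ?t = "\<lambda>(v, u). euler_term v u (shift_coeffs a c v u)"
  have "inj_on ?g (coeff_support c)" by (auto simp: inj_on_def)
  then have "euler_sum (shift_coeffs a c) = (\<Sum>x\<in>coeff_support c. ?t (?g x))"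
    unfolding euler_sum_def coeff_support_shift_coeffs by (rule sum.reindex[THEN trans]) simp
  then show ?thesis using assms
    by (simp add: euler_sum_def coeff_scale_sum euler_term_shift case_prod_beta)
qed

definition raise_coeffs :: "'v \<Rightarrow> ('v mon \<Rightarrow> 'v mon \<Rightarrow> 'k::zero) \<Rightarrow> 'v mon \<Rightarrow> 'v mon \<Rightarrow> 'k" where
  "raise_coeffs j c v u = (if 0 < lookup u j then c v (u - unit_mon j) else 0)"

lemma raise_coeffs_add_unit_mon [simp]: "raise_coeffs j c v (u + unit_mon j) = c v u"
  by (simp add: raise_coeffs_def lookup_add lookup_unit_mon)

lemma coeff_support_raise_coeffs:
  "coeff_support (raise_coeffs j c) = (\<lambda>(v, u). (v, u + unit_mon j)) ` coeff_support c"
proof -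
  have "(v, u) \<in> (\<lambda>(v, u). (v, u + unit_mon j)) ` coeff_support c"
    if "0 < lookup u j" "c v (u - unit_mon j) \<noteq> 0" for v u
    using that mon_diff_add_unit_mon[of u j] by (force simp: coeff_support_def)
  then show ?thesis by (auto simp: coeff_support_def raise_coeffs_def lookup_add lookup_unit_mon split: if_splits)
qed

lemma euler_sum_raise:
  assumes "finite (coeff_support c)"
  shows "(\<Sum>(v, u)\<in>coeff_support c. euler_term v (u + unit_mon j) (c v u)) = euler_sum (raise_coeffs j c)"
proof -
  let ?g = "\<lambda>(v, u). (v, u + unit_mon j)" and ?t = "\<lambda>(v, u). euler_term v u (raise_coeffs j c v u)"
  have "inj_on ?g (coeff_support c)" by (auto simp: inj_on_def)
  then have "euler_sum (raise_coeffs j c) = (\<Sum>x\<in>coeff_support c. ?t (?g x))"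
    unfolding euler_sum_def coeff_support_raise_coeffs by (rule sum.reindex[THEN trans]) simp
  then show ?thesis by (simp add: case_prod_beta)
qed

(* \<delta>\<^sub>j x\<^sup>v \<delta>\<^sup>u = x\<^sup>v \<delta>^(u + e\<^sub>j) + v\<^sub>j x\<^sup>v \<delta>\<^sup>u by the commutation rule. *)
lemma euler_mult_euler_sum:
  assumes "finite (coeff_support c)"
  shows "euler_mult j (euler_sum c) = euler_sum (raise_coeffs j c + (\<lambda>v u. of_nat (lookup v j) * c v u))"
proof -
  have "finite (coeff_support (raise_coeffs j c))"
    using assms by (simp add: coeff_support_raise_coeffs)
  moreover have "finite (coeff_support (\<lambda>v u. of_nat (lookup v j) * c v u))"
    using assms by (rule finite_coeff_support_mult)
  moreover have "euler_sum (\<lambda>v u. of_nat (lookup v j) * c v u)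
      = (\<Sum>(v, u)\<in>coeff_support c. euler_term v u (of_nat (lookup v j) * c v u))"
    using assms by (intro euler_sum_superset) (auto simp: coeff_support_def)
  ultimately show ?thesis using assms
    by (simp add: euler_sum_add euler_sum_raise[symmetric] euler_sum_def[of c] euler_mult_sum
                  euler_mult_euler_term case_prod_beta sum.distrib)
qed

definition has_euler_expansion :: "nat \<Rightarrow> ('v::{finite,linorder}, ('v, 'k::field_char_0) mpoly) dop \<Rightarrow> bool" where
  "has_euler_expansion k M \<longleftrightarrow>
     (\<exists>c. finite (coeff_support c) \<and> (\<forall>(v, u)\<in>coeff_support c. tdeg u \<le> k) \<and> M = euler_sum c)"

lemma has_euler_expansion_add:
  assumes "has_euler_expansion k M1" "has_euler_expansion k M2"
  shows "has_euler_expansion k (M1 + M2)"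
proof -
  obtain c1 c2 where c: "finite (coeff_support c1)" "\<forall>(v, u)\<in>coeff_support c1. tdeg u \<le> k" "M1 = euler_sum c1"
      "finite (coeff_support c2)" "\<forall>(v, u)\<in>coeff_support c2. tdeg u \<le> k" "M2 = euler_sum c2"
    using assms unfolding has_euler_expansion_def by blast
  then have "\<forall>(v, u)\<in>coeff_support (c1 + c2). tdeg u \<le> k" using coeff_support_add_subset[of c1 c2] by blast
  then show ?thesis using c unfolding has_euler_expansion_def
    by (intro exI[of _ "c1 + c2"]) (simp add: euler_sum_add finite_coeff_support_add)
qed

lemma has_euler_expansion_sum:
  "finite A \<Longrightarrow> (\<And>x. x \<in> A \<Longrightarrow> has_euler_expansion k (f x)) \<Longrightarrow> has_euler_expansion k (sum f A)"
proof (induction A rule: finite_induct)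
  case empty
  show ?case unfolding has_euler_expansion_def
    by (intro exI[of _ "\<lambda>_ _. 0"]) (simp add: euler_sum_def coeff_support_def)
qed (auto intro: has_euler_expansion_add)

lemma has_euler_expansion_mono: "has_euler_expansion k M \<Longrightarrow> k \<le> k' \<Longrightarrow> has_euler_expansion k' M"
  unfolding has_euler_expansion_def by fastforce

lemma has_euler_expansion_scale:
  assumes "has_euler_expansion k M"
  shows "has_euler_expansion k (coeff_scale (single 0 s) M)"
proof -
  obtain c where c: "finite (coeff_support c)" "\<forall>(v, u)\<in>coeff_support c. tdeg u \<le> k" "M = euler_sum c"
    using assms unfolding has_euler_expansion_def by blast
  have "coeff_support (\<lambda>v u. s * c v u) \<subseteq> coeff_support c" by (auto simp: coeff_support_def)
  then show ?thesis using c unfolding has_euler_expansion_def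
    by (intro exI[of _ "\<lambda>v u. s * c v u"]) (auto simp: euler_sum_scale intro: finite_subset)
qed

lemma has_euler_expansion_shift:
  assumes "has_euler_expansion k M"
  shows "has_euler_expansion k (coeff_scale (single a 1) M)"
proof -
  obtain c where c: "finite (coeff_support c)" "\<forall>(v, u)\<in>coeff_support c. tdeg u \<le> k" "M = euler_sum c"
    using assms unfolding has_euler_expansion_def by blast
  then show ?thesis unfolding has_euler_expansion_def
    by (intro exI[of _ "shift_coeffs a c"]) (auto simp: euler_sum_shift coeff_support_shift_coeffs)
qed

lemma has_euler_expansion_euler_mult:
  assumes "has_euler_expansion k M"
  shows "has_euler_expansion (Suc k) (euler_mult j M)"
proof -
  obtain c where c: "finite (coeff_support c)" "\<forall>(v, u)\<in>coeff_support c. tdeg u \<le> k" "M = euler_sum c"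
    using assms unfolding has_euler_expansion_def by blast
  let ?c = "raise_coeffs j c + (\<lambda>v u. of_nat (lookup v j) * c v u)"
  have "coeff_support ?c \<subseteq> coeff_support (raise_coeffs j c) \<union> coeff_support c"
    by (auto simp: coeff_support_def)
  moreover have "\<forall>(v, u)\<in>coeff_support (raise_coeffs j c) \<union> coeff_support c. tdeg u \<le> Suc k"
    using c(2) by (auto simp: coeff_support_raise_coeffs tdeg_add_unit_mon)
  moreover have "finite (coeff_support (raise_coeffs j c) \<union> coeff_support c)"
    using c(1) by (simp add: coeff_support_raise_coeffs)
  ultimately show ?thesis using c unfolding has_euler_expansion_def
    by (intro exI[of _ ?c]) (auto simp: euler_mult_euler_sum intro: finite_subset)
qed

(* x^(u + e\<^sub>j) \<partial>^(u + e\<^sub>j) = \<delta>\<^sub>j x\<^sup>u \<partial>\<^sup>u - u\<^sub>j x\<^sup>u \<partial>\<^sup>u *)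
lemma has_euler_expansion_x_partial:
  "has_euler_expansion (tdeg u) (single u (single u (1::'k::field_char_0)) :: ('v::{finite,linorder}, ('v, 'k) mpoly) dop)"
proof (induction u rule: mon_induct)
  case zero
  have "(single 0 (single 0 1) :: ('v, ('v, 'k) mpoly) dop) = euler_sum (\<lambda>v u. if v = 0 \<and> u = 0 then 1 else 0)"
    by (simp add: euler_sum_superset[of "{(0, 0)}"] coeff_support_def euler_term_def delta_pow_0 coeff_scale_single)
  then show ?case unfolding has_euler_expansion_def
    by (intro exI[of _ "\<lambda>v u. if v = 0 \<and> u = 0 then (1::'k) else 0"]) (auto simp: coeff_support_def tdeg_def)
next
  case (add_unit u j)
  let ?X = "\<lambda>u. single u (single u (1::'k)) :: ('v, ('v, 'k) mpoly) dop"
  have "euler_mult j (?X u) = ?X (u + unit_mon j) + coeff_scale (single 0 (of_nat (lookup u j))) (?X u)"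
    by (simp add: euler_mult_def mpd.partial_mult_single coeff_scale_add coeff_scale_single
                  x_mult_mp_deriv_single mult_single add.commute of_nat_mult_single)
  then have "?X (u + unit_mon j) = euler_mult j (?X u) + coeff_scale (single 0 (- of_nat (lookup u j))) (?X u)"
    by (simp add: eq_diff_eq single_uminus coeff_scale_add_left[symmetric] poly_mapping_eqI lookup_add)
  moreover have "has_euler_expansion (Suc (tdeg u)) (euler_mult j (?X u) + coeff_scale (single 0 (- of_nat (lookup u j))) (?X u))"
    using add_unit by (intro has_euler_expansion_add has_euler_expansion_euler_mult has_euler_expansion_scale)
                       (auto elim: has_euler_expansion_mono)
  ultimately show ?case by (simp add: tdeg_add_unit_mon)
qed

lemma has_euler_expansion_xmon_mult:
  fixes P :: "('v::{finite,linorder}, ('v, 'k::field_char_0) mpoly) dop"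
  shows "has_euler_expansion (dop_order P) (coeff_scale (single (const_mon (dop_order P)) 1) P)"
proof -
  let ?m = "dop_order P"
  let ?A = "const_mon ?m :: 'v mon"
  (* x\<^sup>A P is a combination of the x\<^sup>a x\<^sup>u \<partial>\<^sup>u, since every \<partial>\<^sup>u in P has u \<le> A componentwise. *)
  have "single ?A 1 * lookup P u = (\<Sum>a\<in>keys (lookup P u). single (?A + a) (lookup (lookup P u) a))" for u
    by (subst (1) poly_mapping_sum_single[of "lookup P u"]) (simp add: sum_distrib_left mult_single)
  then have "coeff_scale (single ?A 1) P = (\<Sum>u\<in>keys P. \<Sum>a\<in>keys (lookup P u). single u (single (?A + a) (lookup (lookup P u) a)))"
    by (subst (1) poly_mapping_sum_single[of P]) (simp add: coeff_scale_sum coeff_scale_single single_sum)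
  moreover have "has_euler_expansion ?m (single u (single (?A + a) (lookup (lookup P u) a)))" if u: "u \<in> keys P" for u a
  proof -
    have td: "tdeg u \<le> ?m" unfolding dop_order_def using u by (auto intro: Max_ge)
    then have "lookup u i \<le> lookup ?A i" for i using lookup_le_tdeg[of u i] by (simp add: lookup_const_mon)
    then have "?A + a - u + u = ?A + a"
      by (intro poly_mapping_eqI) (auto simp: lookup_add lookup_minus intro: le_add_diff_inverse2 trans_le_add1)
    then have "single u (single (?A + a) (lookup (lookup P u) a))
        = coeff_scale (single 0 (lookup (lookup P u) a)) (coeff_scale (single (?A + a - u) 1) (single u (single u (1::'k))))"
      by (simp add: coeff_scale_single mult_single)
    moreover have "has_euler_expansion ?m \<dots>"
      by (intro has_euler_expansion_scale has_euler_expansion_shift has_euler_expansion_mono[OF has_euler_expansion_x_partial td])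
    ultimately show ?thesis by simp
  qed
  ultimately show ?thesis by (auto intro!: has_euler_expansion_sum)
qed

lemma ind_coeffs_euler_sum:
  fixes P :: "('v::{finite,linorder}, ('v, 'k::field_char_0) mpoly) dop"
  shows "finite (coeff_support (ind_coeffs P))"
    and "coeff_scale (single (const_mon (dop_order P)) 1) P = euler_sum (ind_coeffs P)"
proof -
  have spec_iff: "(finite {(v, u). c v u \<noteq> 0} \<and> (\<forall>v u. c v u \<noteq> 0 \<longrightarrow> tdeg u \<le> dop_order P) \<and>
      pmult (dop_xmon (const_mon (dop_order P))) P =
        (\<Sum>(v, u)\<in>{(v, u). c v u \<noteq> 0}. pmult (dop_xmon v) (Poly_Mapping.map (\<lambda>a. single 0 (c v u) * a) (delta_pow u))))
    \<longleftrightarrow> finite (coeff_support c) \<and> (\<forall>(v, u)\<in>coeff_support c. tdeg u \<le> dop_order P)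
         \<and> coeff_scale (single (const_mon (dop_order P)) 1) P = euler_sum c" for c
    by (auto simp: dop_xmon_def mpd.dop_mult_const_left euler_term_def euler_sum_def coeff_support_def
                   coeff_scale_def[symmetric])
  obtain c where c: "finite (coeff_support c)" "\<forall>(v, u)\<in>coeff_support c. tdeg u \<le> dop_order P"
      "coeff_scale (single (const_mon (dop_order P)) 1) P = euler_sum c"
    using has_euler_expansion_xmon_mult[of P] unfolding has_euler_expansion_def by blast
  have "ind_coeffs P = c"
    unfolding ind_coeffs_def spec_iff by (rule the_equality) (use c in \<open>auto intro: euler_sum_inject\<close>)
  then show "finite (coeff_support (ind_coeffs P))"
    and "coeff_scale (single (const_mon (dop_order P)) 1) P = euler_sum (ind_coeffs P)"
    using c by simp_all
qed

subsection \<open>The indicial polynomial read off an expansion\<close>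

definition ord_min :: "('a \<Rightarrow> 'a \<Rightarrow> bool) \<Rightarrow> 'a set \<Rightarrow> 'a" where
  "ord_min ord T = (THE v0. v0 \<in> T \<and> (\<forall>v\<in>T. v \<noteq> v0 \<longrightarrow> ord v0 v))"

lemma graded_term_order_trans: "graded_term_order ord \<Longrightarrow> ord a b \<Longrightarrow> ord b c \<Longrightarrow> ord a c"
  unfolding graded_term_order_def by blast

lemma graded_term_order_total: "graded_term_order ord \<Longrightarrow> a = b \<or> ord a b \<or> ord b a"
  unfolding graded_term_order_def by blast

lemma graded_term_order_add_left: "graded_term_order ord \<Longrightarrow> ord a b \<Longrightarrow> ord (c + a) (c + b)"
  unfolding graded_term_order_def by (metis add.commute)

lemma ord_min_eq:
  assumes "graded_term_order ord" "v0 \<in> T" "\<forall>v\<in>T. v \<noteq> v0 \<longrightarrow> ord v0 v"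
  shows "ord_min ord T = v0"
  unfolding ord_min_def
proof (rule the_equality)
  fix w assume w: "w \<in> T \<and> (\<forall>v\<in>T. v \<noteq> w \<longrightarrow> ord w v)"
  show "w = v0"
  proof (rule ccontr)
    assume "w \<noteq> v0"
    then have "ord w v0" "ord v0 w" using w assms by auto
    then have "ord w w" by (rule graded_term_order_trans[OF assms(1)])
    then show False using assms(1) by (simp add: graded_term_order_def)
  qed
qed (use assms in blast)

lemma ord_min_least:
  assumes ord: "graded_term_order ord" and "finite T" "T \<noteq> {}"
  shows "ord_min ord T \<in> T" "\<forall>v\<in>T. v \<noteq> ord_min ord T \<longrightarrow> ord (ord_min ord T) v"
proof -
  have "\<exists>v0\<in>T. \<forall>v\<in>T. v \<noteq> v0 \<longrightarrow> ord v0 v"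
    using assms(2,3)
  proof (induction T rule: finite_ne_induct)
    case (insert x F)
    then obtain m where m: "m \<in> F" "\<forall>v\<in>F. v \<noteq> m \<longrightarrow> ord m v" by blast
    then have "x \<noteq> m" using insert by blast
    then consider "ord x m" | "ord m x" using graded_term_order_total[OF ord, of x m] by blast
    then show ?case
    proof cases
      case 1
      have "ord x v" if "v \<in> F" "v \<noteq> m" for v
        using graded_term_order_trans[OF ord 1] m that by blast
      then have "\<forall>v\<in>insert x F. v \<noteq> x \<longrightarrow> ord x v" using 1 by blast
      then show ?thesis by blast
    next
      case 2
      then show ?thesis using m by blast
    qed
  qed simp
  then obtain v0 where "v0 \<in> T" "\<forall>v\<in>T. v \<noteq> v0 \<longrightarrow> ord v0 v" by blast
  moreover from this have "ord_min ord T = v0" by (intro ord_min_eq[OF ord])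
  ultimately show "ord_min ord T \<in> T" "\<forall>v\<in>T. v \<noteq> ord_min ord T \<longrightarrow> ord (ord_min ord T) v" by simp_all
qed

definition x_support :: "('a \<Rightarrow> 'b \<Rightarrow> 'k::zero) \<Rightarrow> 'a set" where
  "x_support c = {v. \<exists>u. c v u \<noteq> 0}"

definition lowest_row :: "('v mon \<Rightarrow> 'v mon \<Rightarrow> bool) \<Rightarrow> ('v mon \<Rightarrow> 'v mon \<Rightarrow> 'k::zero) \<Rightarrow> 'v mon \<Rightarrow> 'k" where
  "lowest_row ord c = c (ord_min ord (x_support c))"

lemma finite_x_support: "finite (coeff_support c) \<Longrightarrow> finite (x_support c)"
proof -
  have "x_support c = fst ` coeff_support c" by (force simp: x_support_def coeff_support_def)
  then show "finite (coeff_support c) \<Longrightarrow> finite (x_support c)" by simp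
qed

lemma coeff_scale_xmon_eq_0_iff:
  fixes P :: "('v::{finite,linorder}, ('v, 'k::field_char_0) mpoly) dop"
  shows "coeff_scale (single a 1) P = 0 \<longleftrightarrow> P = 0"
proof
  assume "coeff_scale (single a 1) P = 0"
  then have "single a 1 * lookup P w = 0" for w by (metis lookup_coeff_scale lookup_zero)
  moreover have "single a (1::'k) \<noteq> 0" by (metis lookup_single_eq one_neq_zero lookup_zero)
  ultimately show "P = 0" by (intro poly_mapping_eqI) simp
qed simp

lemma euler_sum_eq_0_iff:
  fixes c :: "'v::{finite,linorder} mon \<Rightarrow> 'v mon \<Rightarrow> 'k::field_char_0"
  assumes "finite (coeff_support c)"
  shows "euler_sum c = 0 \<longleftrightarrow> x_support c = {}"
proof
  assume "euler_sum c = 0"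
  then have "euler_sum c = euler_sum (\<lambda>_ _. 0 :: 'k)" by (simp add: euler_sum_def coeff_support_def)
  then have "c = (\<lambda>_ _. 0)" using assms by (intro euler_sum_inject) (auto simp: coeff_support_def)
  then show "x_support c = {}" by (simp add: x_support_def)
qed (simp add: euler_sum_def x_support_def coeff_support_def)

lemma x_support_shift_coeffs: "x_support (shift_coeffs a c) = (\<lambda>v. a + v) ` x_support c"
  by (force simp: x_support_def shift_coeffs_def split: if_splits)

lemma ord_min_shift:
  assumes ord: "graded_term_order ord" and "finite T" "T \<noteq> {}"
  shows "ord_min ord ((\<lambda>v. a + v) ` T) = a + ord_min ord T"
  using ord_min_least[OF assms] graded_term_order_add_left[OF ord]
  by (intro ord_min_eq[OF ord]) auto

lemma lowest_row_shift:
  assumes "graded_term_order ord" "finite (coeff_support c)" "x_support c \<noteq> {}"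
  shows "ord_min ord (x_support (shift_coeffs a c)) = a + ord_min ord (x_support c)"
    and "lowest_row ord (shift_coeffs a c) = lowest_row ord c"
  using ord_min_shift[OF assms(1) finite_x_support[OF assms(2)] assms(3)]
  by (simp_all add: lowest_row_def x_support_shift_coeffs)

lemma ind_eq_lowest_row:
  fixes P :: "('v::{finite,linorder}, ('v, 'k::field_char_0) mpoly) dop"
  assumes ord: "graded_term_order ord" and fin: "finite (coeff_support c)"
    and rep: "coeff_scale (single a 1) P = euler_sum c" and nz: "x_support c \<noteq> {}"
  shows "lookup (ind ord P) = lowest_row ord c"
proof -
  let ?c0 = "ind_coeffs P" and ?A = "const_mon (dop_order P) :: 'v mon"
  note fin0 = ind_coeffs_euler_sum(1)[of P] and rep0 = ind_coeffs_euler_sum(2)[of P]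
  have "P \<noteq> 0"
    using rep nz euler_sum_eq_0_iff[OF fin] coeff_scale_xmon_eq_0_iff by metis
  (* c and ind_coeffs P expand P up to different powers of x, so they agree after shifting. *)
  have "euler_sum (shift_coeffs a ?c0) = coeff_scale (single a 1) (coeff_scale (single ?A 1) P)"
    by (simp add: rep0 euler_sum_shift[OF fin0])
  also have "\<dots> = coeff_scale (single ?A 1) (coeff_scale (single a 1) P)"
    by (simp add: coeff_scale_coeff_scale mult_single add.commute)
  also have "\<dots> = euler_sum (shift_coeffs ?A c)"
    by (simp add: rep euler_sum_shift[OF fin])
  finally have eq: "shift_coeffs a ?c0 = shift_coeffs ?A c"
    using fin fin0 by (intro euler_sum_inject) (simp_all add: coeff_support_shift_coeffs)
  then have nz0: "x_support ?c0 \<noteq> {}" using nz x_support_shift_coeffs by (metis image_is_empty)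
  have mins: "a + ord_min ord (x_support ?c0) = ?A + ord_min ord (x_support c)"
    using lowest_row_shift(1)[OF ord fin0 nz0, of a] lowest_row_shift(1)[OF ord fin nz, of ?A] eq by simp
  have "lowest_row ord ?c0 = shift_coeffs a ?c0 (a + ord_min ord (x_support ?c0))"
    by (simp add: lowest_row_def)
  also have "\<dots> = shift_coeffs ?A c (?A + ord_min ord (x_support c))"
    by (simp only: eq mins)
  also have "\<dots> = lowest_row ord c"
    by (simp add: lowest_row_def)
  finally have "lowest_row ord ?c0 = lowest_row ord c" .
  moreover have "finite {u. lowest_row ord ?c0 u \<noteq> 0}"
    by (rule finite_subset[of _ "snd ` coeff_support ?c0"]) (use fin0 in \<open>force simp: coeff_support_def lowest_row_def\<close>)+
  ultimately have "finite {u. lowest_row ord c u \<noteq> 0}"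
    and "ind ord P = (\<Sum>u | lowest_row ord c u \<noteq> 0. single u (lowest_row ord c u))"
    using \<open>P \<noteq> 0\<close> by (simp_all add: ind_def ord_min_def[symmetric] x_support_def[symmetric]
                                     lowest_row_def[symmetric] Let_def)
  then show ?thesis by (auto simp: lookup_sum lookup_single when_def)
qed

lemma euler_expansion_nonzero:
  fixes P :: "('v::{finite,linorder}, ('v, 'k::field_char_0) mpoly) dop"
  assumes "P \<noteq> 0"
  obtains A c where "finite (coeff_support c)" "x_support c \<noteq> {}" "coeff_scale (single A 1) P = euler_sum c"
proof
  show "finite (coeff_support (ind_coeffs P))"
    and rep: "coeff_scale (single (const_mon (dop_order P)) 1) P = euler_sum (ind_coeffs P)"
    by (rule ind_coeffs_euler_sum)+
  show "x_support (ind_coeffs P) \<noteq> {}"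
    using rep assms euler_sum_eq_0_iff[OF ind_coeffs_euler_sum(1)] coeff_scale_xmon_eq_0_iff by metis
qed

lemma lowest_row_add:
  fixes c1 c2 :: "'v mon \<Rightarrow> 'v mon \<Rightarrow> 'k::comm_monoid_add"
  assumes ord: "graded_term_order ord"
    and fin: "finite (coeff_support c1)" "finite (coeff_support c2)"
    and nz: "x_support c1 \<noteq> {}" "x_support c2 \<noteq> {}"
    and same: "ord_min ord (x_support c1) = ord_min ord (x_support c2)"
    and row: "lowest_row ord c1 + lowest_row ord c2 \<noteq> 0"
  shows "x_support (c1 + c2) \<noteq> {}" "lowest_row ord (c1 + c2) = lowest_row ord c1 + lowest_row ord c2"
proof -
  let ?V = "ord_min ord (x_support c1)"
  have "?V \<in> x_support (c1 + c2)"
    using row same by (auto simp: x_support_def lowest_row_def fun_eq_iff)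
  moreover have "ord ?V v" if "v \<in> x_support (c1 + c2)" "v \<noteq> ?V" for v
  proof -
    have "v \<in> x_support c1 \<or> v \<in> x_support c2"
      using that(1) by (auto simp: x_support_def)
    then show ?thesis
      using ord_min_least(2)[OF ord finite_x_support[OF fin(1)] nz(1)]
        ord_min_least(2)[OF ord finite_x_support[OF fin(2)] nz(2)] same that(2) by auto
  qed
  ultimately have "ord_min ord (x_support (c1 + c2)) = ?V" by (intro ord_min_eq[OF ord]) auto
  then show "lowest_row ord (c1 + c2) = lowest_row ord c1 + lowest_row ord c2"
    using same by (simp add: lowest_row_def fun_eq_iff)
  show "x_support (c1 + c2) \<noteq> {}" using \<open>?V \<in> _\<close> by blast
qed

lemma xmon_mult_euler_mult_shifted:
  fixes P :: "('v::{finite,linorder}, ('v, 'k::field_char_0) mpoly) dop"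
  assumes fin: "finite (coeff_support c)" and rep: "coeff_scale (single A 1) P = euler_sum c"
  shows "coeff_scale (single A 1) (euler_mult j P + coeff_scale (single 0 (of_nat (lookup A j) - s)) P)
           = euler_sum (raise_coeffs j c + (\<lambda>v u. (of_nat (lookup v j) - s) * c v u))"
proof -
  let ?c = "raise_coeffs j c + (\<lambda>v u. of_nat (lookup v j) * c v u)"
  have fin': "finite (coeff_support ?c)" "finite (coeff_support (\<lambda>v u. - s * c v u))"
    using fin finite_coeff_support_mult[OF fin, of "\<lambda>_. - s"]
    by (auto simp: coeff_support_raise_coeffs intro!: finite_coeff_support_add finite_coeff_support_mult)
  let ?n = "of_nat (lookup A j) :: 'k"
  have "coeff_scale (single A 1) (euler_mult j P)
      = euler_mult j (euler_sum c) - coeff_scale (single 0 ?n) (euler_sum c)"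
    using euler_mult_xmon[of j A P] by (simp add: rep eq_diff_eq)
  moreover have "coeff_scale (single A 1) (coeff_scale (single 0 q) P) = coeff_scale (single 0 q) (euler_sum c)" for q
    by (simp add: rep[symmetric] coeff_scale_coeff_scale mult.commute)
  moreover have "single 0 (?n - s) = single 0 ?n + single (0 :: 'v mon) (- s)"
    by (simp only: single_add[symmetric] diff_conv_add_uminus)
  ultimately have "coeff_scale (single A 1) (euler_mult j P + coeff_scale (single 0 (?n - s)) P)
      = euler_mult j (euler_sum c) - coeff_scale (single 0 ?n) (euler_sum c)
        + (coeff_scale (single 0 ?n) (euler_sum c) + coeff_scale (single 0 (- s)) (euler_sum c))"
    by (simp only: coeff_scale_add coeff_scale_add_left)
  also have "\<dots> = euler_mult j (euler_sum c) + coeff_scale (single 0 (- s)) (euler_sum c)"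
    by simp
  also have "\<dots> = euler_sum (?c + (\<lambda>v u. - s * c v u))"
    using fin fin' euler_sum_scale[OF fin, of "- s"] by (simp add: euler_mult_euler_sum euler_sum_add)
  also have "?c + (\<lambda>v u. - s * c v u) = raise_coeffs j c + (\<lambda>v u. (of_nat (lookup v j) - s) * c v u)"
    by (simp add: fun_eq_iff algebra_simps)
  finally show ?thesis .
qed

lemma lowest_row_euler_mult_shifted:
  fixes c :: "'v mon \<Rightarrow> 'v mon \<Rightarrow> 'k::comm_ring_1"
  assumes ord: "graded_term_order ord" and fin: "finite (coeff_support c)" and nz: "x_support c \<noteq> {}"
    and s: "s = of_nat (lookup (ord_min ord (x_support c)) j)"
  defines "c' \<equiv> raise_coeffs j c + (\<lambda>v u. (of_nat (lookup v j) - s) * c v u)"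
  shows "x_support c' \<noteq> {}" "lowest_row ord c' = raise_coeffs j c (ord_min ord (x_support c))"
proof -
  let ?v0 = "ord_min ord (x_support c)"
  have sub: "x_support c' \<subseteq> x_support c"
  proof
    fix v assume "v \<in> x_support c'"
    then obtain u where "c' v u \<noteq> 0" by (auto simp: x_support_def)
    then have "c v (u - unit_mon j) \<noteq> 0 \<or> c v u \<noteq> 0"
      by (auto simp: c'_def raise_coeffs_def split: if_splits)
    then show "v \<in> x_support c" by (auto simp: x_support_def)
  qed
  obtain u0 where "c ?v0 u0 \<noteq> 0" using ord_min_least(1)[OF ord finite_x_support[OF fin] nz] by (auto simp: x_support_def)
  then have "?v0 \<in> x_support c'"
    by (auto simp: x_support_def c'_def s intro!: exI[of _ "u0 + unit_mon j"])
  then have "ord_min ord (x_support c') = ?v0"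
    using ord_min_least(2)[OF ord finite_x_support[OF fin] nz] sub by (intro ord_min_eq[OF ord]) auto
  then show "lowest_row ord c' = raise_coeffs j c ?v0"
    by (simp add: lowest_row_def c'_def s fun_eq_iff)
  show "x_support c' \<noteq> {}" using \<open>?v0 \<in> x_support c'\<close> by blast
qed

lemma lookup_dop_embed: "lookup (dop_embed P) w = Fract (lookup P w) 1"
  by (simp add: dop_embed_def map.rep_eq when_def fract_collapse)

lemma dop_embed_0: "dop_embed 0 = 0"
  by (rule poly_mapping_eqI) (simp add: lookup_dop_embed fract_collapse)

lemma dop_embed_add: "dop_embed (P + Q) = dop_embed P + dop_embed Q"
  by (rule poly_mapping_eqI) (simp add: lookup_dop_embed lookup_add)

lemma dop_embed_coeff_scale: "dop_embed (coeff_scale q P) = coeff_scale (Fract q 1) (dop_embed P)"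
  by (rule poly_mapping_eqI) (simp add: lookup_dop_embed)

lemma dop_embed_euler_mult:
  "dop_embed (euler_mult j P) = coeff_scale (Fract (single (unit_mon j) 1) 1) (rfd.partial_mult j (dop_embed P))"
proof -
  have "dop_embed (mpd.partial_mult j P) = rfd.partial_mult j (dop_embed P)"
    by (rule poly_mapping_eqI)
       (simp add: lookup_dop_embed mpd.lookup_partial_mult rfd.lookup_partial_mult rf_deriv_Fract_1 fract_collapse)
  then show ?thesis by (simp add: euler_mult_def dop_embed_coeff_scale)
qed

lemma rat_left_ideal_0: "0 \<in> rat_left_ideal G"
  unfolding rat_left_ideal_def by (intro CollectI exI[of _ "{}"]) simp

lemma rat_left_ideal_add:
  assumes "X \<in> rat_left_ideal G" "Y \<in> rat_left_ideal G"
  shows "X + Y \<in> rat_left_ideal G"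
proof -
  obtain S1 Q1 where 1: "finite S1" "S1 \<subseteq> G" "X = (\<Sum>g\<in>S1. dop_mult rf_deriv (Q1 g) (dop_embed g))"
    using assms(1) unfolding rat_left_ideal_def by blast
  obtain S2 Q2 where 2: "finite S2" "S2 \<subseteq> G" "Y = (\<Sum>g\<in>S2. dop_mult rf_deriv (Q2 g) (dop_embed g))"
    using assms(2) unfolding rat_left_ideal_def by blast
  have "(\<Sum>g\<in>S1 \<union> S2. dop_mult rf_deriv (if g \<in> S1 then Q1 g else 0) (dop_embed g)) = X"
    unfolding 1(3) using 1 2 by (intro sum.mono_neutral_cong_right) auto
  moreover have "(\<Sum>g\<in>S1 \<union> S2. dop_mult rf_deriv (if g \<in> S2 then Q2 g else 0) (dop_embed g)) = Y"
    unfolding 2(3) using 1 2 by (intro sum.mono_neutral_cong_right) auto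
  ultimately have "X + Y = (\<Sum>g\<in>S1 \<union> S2. dop_mult rf_deriv
      ((if g \<in> S1 then Q1 g else 0) + (if g \<in> S2 then Q2 g else 0)) (dop_embed g))"
    by (simp only: rfd.dop_mult_add_left sum.distrib)
  then show ?thesis unfolding rat_left_ideal_def using 1 2
    by (intro CollectI exI[of _ "S1 \<union> S2"] exI[of _ "\<lambda>g. (if g \<in> S1 then Q1 g else 0) + (if g \<in> S2 then Q2 g else 0)"]) simp
qed

lemma rat_left_ideal_left_mult:
  fixes G :: "('v::{finite,linorder}, ('v, 'k::field_char_0) mpoly) dop set"
  assumes "X \<in> rat_left_ideal G" "\<And>Q R. f (dop_mult rf_deriv Q R) = dop_mult rf_deriv (f Q) R"
    "\<And>h (A :: ('v, ('v, 'k) mpoly) dop set). f (sum h A) = (\<Sum>x\<in>A. f (h x))"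
  shows "f X \<in> rat_left_ideal G"
proof -
  obtain S Q where "finite S" "S \<subseteq> G" "X = (\<Sum>g\<in>S. dop_mult rf_deriv (Q g) (dop_embed g))"
    using assms(1) unfolding rat_left_ideal_def by blast
  then show ?thesis unfolding rat_left_ideal_def
    by (intro CollectI exI[of _ S] exI[of _ "\<lambda>g. f (Q g)"]) (simp add: assms(2,3))
qed

lemma rat_left_ideal_coeff_scale: "X \<in> rat_left_ideal G \<Longrightarrow> coeff_scale q X \<in> rat_left_ideal G"
  by (rule rat_left_ideal_left_mult) (simp_all add: rfd.dop_mult_coeff_scale_left coeff_scale_sum)

lemma rat_left_ideal_partial_mult: "X \<in> rat_left_ideal G \<Longrightarrow> rfd.partial_mult j X \<in> rat_left_ideal G"
  by (rule rat_left_ideal_left_mult) (simp_all add: rfd.partial_mult_dop_mult rfd.partial_mult_sum)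

lemma dop_embed_in_rat_left_ideal_add:
  "dop_embed P \<in> rat_left_ideal G \<Longrightarrow> dop_embed Q \<in> rat_left_ideal G \<Longrightarrow> dop_embed (P + Q) \<in> rat_left_ideal G"
  unfolding dop_embed_add by (rule rat_left_ideal_add)

lemma dop_embed_in_rat_left_ideal_coeff_scale:
  "dop_embed P \<in> rat_left_ideal G \<Longrightarrow> dop_embed (coeff_scale q P) \<in> rat_left_ideal G"
  unfolding dop_embed_coeff_scale by (rule rat_left_ideal_coeff_scale)

lemma dop_embed_in_rat_left_ideal_euler_mult:
  "dop_embed P \<in> rat_left_ideal G \<Longrightarrow> dop_embed (euler_mult j P) \<in> rat_left_ideal G"
  unfolding dop_embed_euler_mult by (intro rat_left_ideal_coeff_scale rat_left_ideal_partial_mult)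

subsection \<open>The indicial ideal\<close>

definition indicial_ideal ::
    "('v::{finite,linorder} mon \<Rightarrow> 'v mon \<Rightarrow> bool) \<Rightarrow> ('v, ('v, 'k::field_char_0) mpoly) dop set \<Rightarrow> ('v, 'k) mpoly set" where
  "indicial_ideal ord G = {ind ord P | P. dop_embed P \<in> rat_left_ideal G}"

lemma ind_0 [simp]: "ind ord 0 = 0"
  by (simp add: ind_def)

lemma zero_in_indicial_ideal: "0 \<in> indicial_ideal ord G"
  unfolding indicial_ideal_def using rat_left_ideal_0
  by (intro CollectI exI[of _ 0]) (simp add: dop_embed_0)

lemma lookup_plus: "lookup (a + b) = lookup a + lookup b"
  by (simp add: fun_eq_iff lookup_add)

lemma indicial_idealI: "dop_embed R \<in> rat_left_ideal G \<Longrightarrow> ind ord R = a \<Longrightarrow> a \<in> indicial_ideal ord G"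
  unfolding indicial_ideal_def by blast

(* Shifting both expansions puts their lowest rows at the same power x^(v1 + v2 + A1 + A2). *)
lemma ind_add_aligned:
  fixes P1 P2 :: "('v::{finite,linorder}, ('v, 'k::field_char_0) mpoly) dop"
  assumes ord: "graded_term_order ord"
    and c1: "finite (coeff_support c1)" "x_support c1 \<noteq> {}" "coeff_scale (single A1 1) P1 = euler_sum c1"
    and c2: "finite (coeff_support c2)" "x_support c2 \<noteq> {}" "coeff_scale (single A2 1) P2 = euler_sum c2"
    and row: "lowest_row ord c1 + lowest_row ord c2 \<noteq> 0"
  defines "v1 \<equiv> ord_min ord (x_support c1)" and "v2 \<equiv> ord_min ord (x_support c2)"
  shows "lookup (ind ord (coeff_scale (single (v2 + A1) 1) P1 + coeff_scale (single (v1 + A2) 1) P2))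
           = lowest_row ord c1 + lowest_row ord c2"
proof -
  let ?R = "coeff_scale (single (v2 + A1) 1) P1 + coeff_scale (single (v1 + A2) 1) P2"
  let ?d1 = "shift_coeffs (v2 + A1 + A2) c1" and ?d2 = "shift_coeffs (v1 + A2 + A1) c2"
  have fin: "finite (coeff_support ?d1)" "finite (coeff_support ?d2)"
    and nz: "x_support ?d1 \<noteq> {}" "x_support ?d2 \<noteq> {}"
    using c1 c2 by (simp_all add: coeff_support_shift_coeffs x_support_shift_coeffs)
  have "coeff_scale (single (A1 + A2) 1) ?R = coeff_scale (single (v2 + A1 + A2) 1) (coeff_scale (single A1 1) P1)
      + coeff_scale (single (v1 + A2 + A1) 1) (coeff_scale (single A2 1) P2)"
    by (simp add: coeff_scale_add coeff_scale_coeff_scale mult_single add_ac)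
  also have "\<dots> = euler_sum (?d1 + ?d2)"
    using c1 c2 fin by (simp add: euler_sum_shift euler_sum_add)
  finally have rep: "coeff_scale (single (A1 + A2) 1) ?R = euler_sum (?d1 + ?d2)" .
  have "ord_min ord (x_support ?d1) = ord_min ord (x_support ?d2)"
    using lowest_row_shift(1)[OF ord c1(1,2)] lowest_row_shift(1)[OF ord c2(1,2)] by (simp add: v1_def v2_def add_ac)
  then have "x_support (?d1 + ?d2) \<noteq> {}" "lowest_row ord (?d1 + ?d2) = lowest_row ord c1 + lowest_row ord c2"
    using lowest_row_add[OF ord fin nz] lowest_row_shift(2)[OF ord c1(1,2)] lowest_row_shift(2)[OF ord c2(1,2)] row
    by simp_all
  then show ?thesis using ind_eq_lowest_row[OF ord finite_coeff_support_add[OF fin] rep] by simp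
qed

lemma indicial_ideal_add:
  assumes ord: "graded_term_order ord" and "a \<in> indicial_ideal ord G" "b \<in> indicial_ideal ord G"
  shows "a + b \<in> indicial_ideal ord G"
proof -
  obtain P1 P2 where P: "a = ind ord P1" "dop_embed P1 \<in> rat_left_ideal G"
      "b = ind ord P2" "dop_embed P2 \<in> rat_left_ideal G"
    using assms(2,3) unfolding indicial_ideal_def by blast
  show ?thesis
  proof (cases "P1 = 0 \<or> P2 = 0 \<or> a + b = 0")
    case True
    then show ?thesis using assms(2,3) zero_in_indicial_ideal unfolding P(1,3) by auto
  next
    case False
    then obtain A1 c1 A2 c2 where
      c1: "finite (coeff_support c1)" "x_support c1 \<noteq> {}" "coeff_scale (single A1 1) P1 = euler_sum c1" and
      c2: "finite (coeff_support c2)" "x_support c2 \<noteq> {}" "coeff_scale (single A2 1) P2 = euler_sum c2"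
      using euler_expansion_nonzero[of P1] euler_expansion_nonzero[of P2] by metis
    have rows: "lowest_row ord c1 = lookup a" "lowest_row ord c2 = lookup b"
      using ind_eq_lowest_row[OF ord c1(1,3,2)] ind_eq_lowest_row[OF ord c2(1,3,2)] by (simp_all add: P)
    moreover have "lookup a + lookup b \<noteq> 0"
      using False by (metis lookup_plus lookup_zero poly_mapping_eqI zero_fun_def)
    ultimately have "lookup (ind ord (coeff_scale (single (ord_min ord (x_support c2) + A1) 1) P1
        + coeff_scale (single (ord_min ord (x_support c1) + A2) 1) P2)) = lookup (a + b)"
      using ind_add_aligned[OF ord c1 c2] by (simp add: lookup_plus)
    moreover have "dop_embed (coeff_scale (single (ord_min ord (x_support c2) + A1) 1) P1
        + coeff_scale (single (ord_min ord (x_support c1) + A2) 1) P2) \<in> rat_left_ideal G"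
      by (intro dop_embed_in_rat_left_ideal_add dop_embed_in_rat_left_ideal_coeff_scale P)
    ultimately show ?thesis by (intro indicial_idealI) (simp_all add: poly_mapping.lookup_inject)
  qed
qed

lemma indicial_ideal_const_mult:
  assumes ord: "graded_term_order ord" and "a \<in> indicial_ideal ord G"
  shows "single 0 k * a \<in> indicial_ideal ord G"
proof -
  obtain P where P: "a = ind ord P" "dop_embed P \<in> rat_left_ideal G"
    using assms(2) unfolding indicial_ideal_def by blast
  show ?thesis
  proof (cases "P = 0 \<or> k = 0")
    case True
    then show ?thesis using zero_in_indicial_ideal by (auto simp: P)
  next
    case False
    then obtain A c where c: "finite (coeff_support c)" "x_support c \<noteq> {}" "coeff_scale (single A 1) P = euler_sum c"
      using euler_expansion_nonzero[of P] by blast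
    let ?R = "coeff_scale (single 0 k) P" and ?c = "\<lambda>v u. k * c v u"
    have supp: "coeff_support ?c = coeff_support c" "x_support ?c = x_support c"
      using False by (auto simp: coeff_support_def x_support_def)
    have "coeff_scale (single A 1) ?R = euler_sum ?c"
      by (simp add: euler_sum_scale[OF c(1)] c(3)[symmetric] coeff_scale_coeff_scale mult.commute)
    then have "lookup (ind ord ?R) = lowest_row ord ?c"
      using c(1,2) supp by (intro ind_eq_lowest_row[OF ord]) simp_all
    then have "lookup (ind ord ?R) = lookup (single 0 k * a)"
      using ind_eq_lowest_row[OF ord c(1,3,2)]
      by (simp add: P fun_eq_iff lowest_row_def \<open>x_support ?c = x_support c\<close>
                    mult_map_scale_conv_mult[symmetric] map.rep_eq when_def)
    moreover have "dop_embed ?R \<in> rat_left_ideal G"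
      using P by (intro dop_embed_in_rat_left_ideal_coeff_scale)
    ultimately show ?thesis by (intro indicial_idealI) (simp_all add: poly_mapping.lookup_inject)
  qed
qed

lemma lookup_var_mult:
  "lookup (single (unit_mon j) 1 * p) w = (if 0 < lookup w j then lookup (p :: ('v, 'k::comm_ring_1) mpoly) (w - unit_mon j) else 0)"
proof -
  have "lookup (single (unit_mon j) 1 * p) w = (\<Sum>b\<in>keys p. if unit_mon j + b = w then lookup p b else 0)"
    by (subst (1) poly_mapping_sum_single[of p]) (simp add: sum_distrib_left mult_single lookup_sum lookup_single when_def)
  also have "\<dots> = (\<Sum>b\<in>keys p. if b = w - unit_mon j then (if 0 < lookup w j then lookup p b else 0) else 0)"
    by (rule sum.cong) (auto simp: unit_mon_add_eq_iff)
  finally show ?thesis by (simp add: in_keys_iff)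
qed

lemma indicial_ideal_var_mult:
  assumes ord: "graded_term_order ord" and "a \<in> indicial_ideal ord G"
  shows "single (unit_mon j) 1 * a \<in> indicial_ideal ord G"
proof -
  obtain P where P: "a = ind ord P" "dop_embed P \<in> rat_left_ideal G"
    using assms(2) unfolding indicial_ideal_def by blast
  show ?thesis
  proof (cases "P = 0")
    case True
    then show ?thesis using zero_in_indicial_ideal by (simp add: P)
  next
    case False
    then obtain A c where c: "finite (coeff_support c)" "x_support c \<noteq> {}" "coeff_scale (single A 1) P = euler_sum c"
      using euler_expansion_nonzero[of P] by blast
    (* Shifting \<delta>\<^sub>j by the exponent of x\<^sub>j in the lowest row cancels the commutation term
       in that row, which becomes y\<^sub>j times the old one. *)
    define s where "s = (of_nat (lookup (ord_min ord (x_support c)) j) :: 'b)"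
    define R where "R = euler_mult j P + coeff_scale (single 0 (of_nat (lookup A j) - s)) P"
    let ?c = "raise_coeffs j c + (\<lambda>v u. (of_nat (lookup v j) - s) * c v u)"
    have "coeff_scale (single A 1) R = euler_sum ?c"
      unfolding R_def by (rule xmon_mult_euler_mult_shifted[OF c(1,3)])
    moreover have "finite (coeff_support ?c)"
      using c(1) by (auto simp: coeff_support_raise_coeffs intro!: finite_coeff_support_add finite_coeff_support_mult)
    ultimately have "lookup (ind ord R) = lowest_row ord ?c"
      using lowest_row_euler_mult_shifted(1)[OF ord c(1,2) s_def] by (intro ind_eq_lowest_row[OF ord])
    then have "lookup (ind ord R) = raise_coeffs j c (ord_min ord (x_support c))"
      using lowest_row_euler_mult_shifted(2)[OF ord c(1,2) s_def] by simp
    then have "lookup (ind ord R) = lookup (single (unit_mon j) 1 * a)"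
      using ind_eq_lowest_row[OF ord c(1,3,2)]
      by (simp add: P fun_eq_iff lookup_var_mult raise_coeffs_def lowest_row_def)
    moreover have "dop_embed R \<in> rat_left_ideal G"
      unfolding R_def using P
      by (intro dop_embed_in_rat_left_ideal_add dop_embed_in_rat_left_ideal_euler_mult
                dop_embed_in_rat_left_ideal_coeff_scale)
    ultimately show ?thesis by (intro indicial_idealI) (simp_all add: poly_mapping.lookup_inject)
  qed
qed

lemma is_ideal_if_closed_under_vars:
  fixes I :: "('v::finite, 'k::comm_ring_1) mpoly set"
  assumes zero: "0 \<in> I" and add: "\<And>a b. a \<in> I \<Longrightarrow> b \<in> I \<Longrightarrow> a + b \<in> I"
    and const: "\<And>k a. a \<in> I \<Longrightarrow> single 0 k * a \<in> I"
    and var: "\<And>j a. a \<in> I \<Longrightarrow> single (unit_mon j) 1 * a \<in> I"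
  shows "is_ideal I"
proof -
  have mon: "\<forall>a\<in>I. single w 1 * a \<in> I" for w
  proof (induction w rule: mon_induct)
    case (add_unit u j)
    have "single (u + unit_mon j) 1 * a = single (unit_mon j) 1 * (single u 1 * a)" for a :: "('v, 'k) mpoly"
      by (simp add: mult.assoc[symmetric] mult_single add.commute)
    then show ?case using add_unit var by simp
  qed simp
  have "r * a \<in> I" if "a \<in> I" for r a
  proof -
    have "(\<Sum>w\<in>W. single 0 (lookup r w) * (single w 1 * a)) \<in> I" if "finite W" for W
      using that by (induction W rule: finite_induct) (use zero add const mon \<open>a \<in> I\<close> in auto)
    moreover have "r * a = (\<Sum>w\<in>keys r. single 0 (lookup r w) * (single w 1 * a))"
      by (subst (1) poly_mapping_sum_single[of r]) (simp add: sum_distrib_right mult.assoc[symmetric] mult_single)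
    ultimately show ?thesis by simp
  qed
  then show ?thesis unfolding is_ideal_def using zero add by blast
qed

theorem mainTheorem9:
  fixes G :: "('v::{finite,linorder}, ('v, 'k::field_char_0) mpoly) dop set"
    and ord :: "'v mon \<Rightarrow> 'v mon \<Rightarrow> bool"
  assumes "graded_term_order ord"
    and "finite G"
  shows "is_ideal {ind ord P | P. dop_embed P \<in> rat_left_ideal G}"
proof -
  have "is_ideal (indicial_ideal ord G)"
    by (rule is_ideal_if_closed_under_vars)
       (simp_all add: zero_in_indicial_ideal indicial_ideal_add indicial_ideal_const_mult
                      indicial_ideal_var_mult assms(1))
  then show ?thesis by (simp add: indicial_ideal_def)
qed

end
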